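(* Under the hypotheses and notation below, $$S^-(z;x,y;t):=\sum_{k\ge0}S^{[-k]}(x,y;t)z^k=\frac{\sqrt{D\,\Delta(\bar x)\,\Delta(z)}}{(1-z\bar x)K(x,y)}=\frac{\sqrt{\Delta(z)}}{1-z\bar x}\,S(x,y;t).$$
   Context: $\mathcal H=\{(k,0):k\le0\}$; $A\subset\mathbb{Z}^2$ is finite, symmetric ($(i,j)\in A\Rightarrow(i,-j)\in A$), with small height variations ($|j|\le1$), with $A_1\ne0$, and additionally reversal-symmetric ($(i,j)\in A\Rightarrow(-i,-j)\in A$). For $k\in\mathbb{Z}$, $a^{[k]}_{i,j}(n)$ is the number of walks $(w_0,\dots,w_n)$ with steps in $A$, $w_0=(k,0)$, $w_n=(i,j)$, and $w_m\notin\mathcal H$ for $1\le m\le n$; $S^{[k]}(x,y;t)=\sum_{n,i,j}a^{[k]}_{i,j}(n)x^iy^jt^n$, and $S=S^{[0]}$. $\bar x=1/x$, $\bar y=1/y$, $A_0(x)=\sum_{(i,0)\in A}x^i$, $A_1(x)=\sum_{(i,1)\in A}x^i$, $K(x,y)=1-tA_0(x)-t(y+\bar y)A_1(x)$, $\delta(x)=(1-tA_0(x))^2-4t^2A_1(x)^2$, and $(D,\Delta(x),\bar\Delta(\bar x))$ its canonical factorization (unique triple of power series in $t$ with $\delta=D\Delta(x)\bar\Delta(\bar x)$, $D$ real coefficients, $\Delta(x)$ coefficients in $\mathbb{R}[x]$, $\bar\Delta(\bar x)$ in $\mathbb{R}[\bar x]$, all normalized to $1$ at $t=0$ and $\Delta(0;t)=\bar\Delta(0;t)=1$);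 under reversal symmetry $\bar\Delta(\bar x)=\Delta(\bar x)$. Square roots have constant term $1$; $1/K$ is expanded in $t$. *)

theory Defs
  imports Complex_Main
begin

text \<open>Formal series in t, z (nonnegative exponents) with Laurent coefficients in x, y.
  A series F is represented by its coefficient function: F n k i j is the
  coefficient of t^n z^k x^i y^j.\<close>

type_synonym ser = "nat \<Rightarrow> nat \<Rightarrow> int \<Rightarrow> int \<Rightarrow> real"

definition ser_good :: "ser \<Rightarrow> bool" where
  "ser_good f \<longleftrightarrow> (\<forall>n k. finite {p. f n k (fst p) (snd p) \<noteq> 0})"

definition ser_one :: ser where
  "ser_one n k i j = (if n = 0 \<and> k = 0 \<and> i = 0 \<and> j = 0 then 1 else 0)"

definition ser_add :: "ser \<Rightarrow> ser \<Rightarrow> ser" where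
  "ser_add f g n k i j = f n k i j + g n k i j"

definition ser_diff :: "ser \<Rightarrow> ser \<Rightarrow> ser" where
  "ser_diff f g n k i j = f n k i j - g n k i j"

definition ser_scale :: "real \<Rightarrow> ser \<Rightarrow> ser" where
  "ser_scale c f n k i j = c * f n k i j"

text \<open>Cauchy product (the inner sum is finite whenever f is well-formed).\<close>
definition ser_mult :: "ser \<Rightarrow> ser \<Rightarrow> ser" where
  "ser_mult f g n k i j =
     (\<Sum>n1\<le>n. \<Sum>k1\<le>k. \<Sum>p\<in>{p. f n1 k1 (fst p) (snd p) \<noteq> 0}.
        f n1 k1 (fst p) (snd p) * g (n - n1) (k - k1) (i - fst p) (j - snd p))"

definition ser_inv :: "ser \<Rightarrow> ser" where
  "ser_inv f = (THE g. ser_good g \<and> ser_mult f g = ser_one)"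

definition ser_sqrt :: "ser \<Rightarrow> ser" where
  "ser_sqrt f = (THE g. ser_good g \<and> g 0 0 0 0 = 1 \<and> ser_mult g g = f)"

text \<open>Substitutions x := 1/x and x := z (for series not involving z).\<close>
definition ser_at_xbar :: "ser \<Rightarrow> ser" where
  "ser_at_xbar f n k i j = f n k (- i) j"

definition ser_x_to_z :: "ser \<Rightarrow> ser" where
  "ser_x_to_z f n k i j = (if i = 0 then f n 0 (int k) j else 0)"

definition in_H :: "int \<times> int \<Rightarrow> bool" where
  "in_H p \<longleftrightarrow> snd p = 0 \<and> fst p \<le> 0"

definition walk_pos :: "int \<Rightarrow> (int \<times> int) list \<Rightarrow> nat \<Rightarrow> int \<times> int" where
  "walk_pos k ss m = (k + sum_list (map fst (take m ss)), sum_list (map snd (take m ss)))"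

definition walk_count :: "(int \<times> int) set \<Rightarrow> int \<Rightarrow> nat \<Rightarrow> int \<Rightarrow> int \<Rightarrow> nat" where
  "walk_count A k n i j = card {ss. set ss \<subseteq> A \<and> length ss = n \<and> walk_pos k ss n = (i, j)
                                    \<and> (\<forall>m\<in>{1..n}. \<not> in_H (walk_pos k ss m))}"

definition S_ser :: "(int \<times> int) set \<Rightarrow> ser" where
  "S_ser A n k i j = (if k = 0 then real (walk_count A 0 n i j) else 0)"

definition Sminus_ser :: "(int \<times> int) set \<Rightarrow> ser" where
  "Sminus_ser A n k i j = real (walk_count A (- int k) n i j)"

definition tA0 :: "(int \<times> int) set \<Rightarrow> ser" where
  "tA0 A n k i j = (if n = 1 \<and> k = 0 \<and> j = 0 \<and> (i, 0) \<in> A then 1 else 0)"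

definition tA1 :: "(int \<times> int) set \<Rightarrow> ser" where
  "tA1 A n k i j = (if n = 1 \<and> k = 0 \<and> j = 0 \<and> (i, 1) \<in> A then 1 else 0)"

definition y_plus_ybar :: ser where
  "y_plus_ybar n k i j = (if n = 0 \<and> k = 0 \<and> i = 0 \<and> (j = 1 \<or> j = -1) then 1 else 0)"

definition z_xbar :: ser where
  "z_xbar n k i j = (if n = 0 \<and> k = 1 \<and> i = -1 \<and> j = 0 then 1 else 0)"

definition K_ser :: "(int \<times> int) set \<Rightarrow> ser" where
  "K_ser A = ser_diff (ser_diff ser_one (tA0 A)) (ser_mult y_plus_ybar (tA1 A))"

definition delta_ser :: "(int \<times> int) set \<Rightarrow> ser" where
  "delta_ser A = ser_diff (ser_mult (ser_diff ser_one (tA0 A)) (ser_diff ser_one (tA0 A)))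
                          (ser_scale 4 (ser_mult (tA1 A) (tA1 A)))"

definition canonical_factorization :: "(int \<times> int) set \<Rightarrow> ser \<times> ser \<times> ser \<Rightarrow> bool" where
  "canonical_factorization A tr \<longleftrightarrow>
     (case tr of (D, Dl, Dlb) \<Rightarrow>
        (\<forall>n k i j. D n k i j \<noteq> 0 \<longrightarrow> k = 0 \<and> i = 0 \<and> j = 0) \<and>
        (\<forall>n k i j. Dl n k i j \<noteq> 0 \<longrightarrow> k = 0 \<and> j = 0 \<and> i \<ge> 0) \<and> ser_good Dl \<and>
        (\<forall>n k i j. Dlb n k i j \<noteq> 0 \<longrightarrow> k = 0 \<and> j = 0 \<and> i \<le> 0) \<and> ser_good Dlb \<and>
        D 0 0 0 0 = 1 \<and>
        (\<forall>i. Dl 0 0 i 0 = (if i = 0 then 1 else 0)) \<and>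
        (\<forall>i. Dlb 0 0 i 0 = (if i = 0 then 1 else 0)) \<and>
        (\<forall>n. Dl n 0 0 0 = (if n = 0 then 1 else 0)) \<and>
        (\<forall>n. Dlb n 0 0 0 = (if n = 0 then 1 else 0)) \<and>
        delta_ser A = ser_mult D (ser_mult Dl Dlb))"

definition canD :: "(int \<times> int) set \<Rightarrow> ser" where
  "canD A = fst (THE tr. canonical_factorization A tr)"

definition canDelta :: "(int \<times> int) set \<Rightarrow> ser" where
  "canDelta A = fst (snd (THE tr. canonical_factorization A tr))"

end

(*
  Write 1/K = sum_m U_m y^m. Extracting the coefficient of y^m from K * (1/K) = 1 gives a three-term
  recurrence for the U_m; its first integral has t-order at least m+1 for every m, so it vanishes,
  and this forces U_0^2 * delta = 1, i.e. U_0 = 1/sqrt(delta).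

  The square root of delta factors canonically as d * s * sb, with d free of x and s (sb) a series in
  positive (negative) powers of x with constant term 1; so the canonical factorization of delta is
  (d^2, s^2, sb^2), and reversal symmetry gives sb(x) = s(1/x).

  A generating function F of walks avoiding H satisfies K F = E - R, where E records the starting
  points and R the walks that would step into H; both live on H, whereas [y^0] F - E lives on the
  positive x-axis. Multiplying [y^0] F = (E - R) / sqrt(delta) by s separates the unknown positive
  powers of x from the rest: F = (1/K) * d * sb * [x^(<=0)] (s E). For E = 1 this gives
  S = d sb / K. For E = 1/(1 - z/x) one uses that s(x) - s(z) is divisible by 1 - z/x with a
  quotient in positive powers of x, so that [x^(<=0)] (s E) = s(z) / (1 - z/x).
*)
theory Submission
  imports Defs "HOL-Library.Poly_Mapping" "HOL-Computational_Algebra.Formal_Power_Series"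
begin

section \<open>Series with Laurent polynomial coefficients\<close>

unbundle fps_syntax

type_synonym laurent2 = "int \<Rightarrow>\<^sub>0 (int \<Rightarrow>\<^sub>0 real)"
type_synonym series = "laurent2 fps fps"

definition lcoeff :: "laurent2 \<Rightarrow> int \<Rightarrow> int \<Rightarrow> real" where
  "lcoeff p i j = Poly_Mapping.lookup (Poly_Mapping.lookup p i) j"

definition coeffs :: "series \<Rightarrow> ser" where
  "coeffs F n k = lcoeff (F $ n $ k)"

definition series_of :: "ser \<Rightarrow> series" where
  "series_of f = Abs_fps (\<lambda>n. Abs_fps (\<lambda>k. Abs_poly_mapping (\<lambda>i. Abs_poly_mapping (f n k i))))"

lemma ser_goodD: "ser_good f \<Longrightarrow> finite {p. f n k (fst p) (snd p) \<noteq> 0}"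
  by (simp add: ser_good_def)

lemma ser_goodI_cover:
  assumes "\<And>n k. finite (S n k)" and "\<And>n k i j. f n k i j \<noteq> 0 \<Longrightarrow> (i, j) \<in> S n k"
  shows "ser_good f"
  unfolding ser_good_def
proof (intro allI)
  fix n k
  have "{p. f n k (fst p) (snd p) \<noteq> 0} \<subseteq> S n k" using assms(2) by auto
  then show "finite {p. f n k (fst p) (snd p) \<noteq> 0}" using assms(1) by (rule finite_subset)
qed

lemma coeffs_series_of:
  assumes "ser_good f" shows "coeffs (series_of f) = f"
proof (intro ext)
  fix n k i j
  define P where "P = {p. f n k (fst p) (snd p) \<noteq> 0}"
  have P: "finite P" using assms by (simp add: ser_good_def P_def)
  have "{j. f n k i j \<noteq> 0} \<subseteq> snd ` P" for i
  proof
    fix j assume "j \<in> {j. f n k i j \<noteq> 0}"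
    then have "(i, j) \<in> P" by (simp add: P_def)
    then show "j \<in> snd ` P" by (rule rev_image_eqI) simp
  qed
  then have rows: "finite {j. f n k i j \<noteq> 0}" for i by (rule finite_surj[OF P])
  have "{i. Abs_poly_mapping (f n k i) \<noteq> 0} \<subseteq> fst ` P"
  proof
    fix i assume "i \<in> {i. Abs_poly_mapping (f n k i) \<noteq> 0}"
    then have "f n k i \<noteq> (\<lambda>j. 0)" by auto
    then obtain j where "f n k i j \<noteq> 0" by auto
    then have "(i, j) \<in> P" by (simp add: P_def)
    then show "i \<in> fst ` P" by (rule rev_image_eqI) simp
  qed
  then have "finite {i. Abs_poly_mapping (f n k i) \<noteq> 0}" by (rule finite_surj[OF P])
  then show "coeffs (series_of f) n k i j = f n k i j"
    unfolding coeffs_def lcoeff_def series_of_def using rows by simp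
qed

lemma series_of_coeffs [simp]: "series_of (coeffs F) = F"
  unfolding coeffs_def lcoeff_def series_of_def by (simp add: lookup_inverse fps_nth_inverse)

lemma coeffs_inject: "coeffs F = coeffs G \<Longrightarrow> F = G"
  by (metis series_of_coeffs)

lemma coeffs_eqI: "(\<And>n k i j. coeffs F n k i j = coeffs G n k i j) \<Longrightarrow> F = G"
  by (rule coeffs_inject) (intro ext)

lemma ser_good_coeffs [simp]: "ser_good (coeffs F)"
proof (rule ser_goodI_cover)
  fix n k
  show "finite (Sigma (Poly_Mapping.keys (F $ n $ k)) (\<lambda>i. Poly_Mapping.keys (Poly_Mapping.lookup (F $ n $ k) i)))"
    by simp
  show "coeffs F n k i j \<noteq> 0 \<Longrightarrow>
      (i, j) \<in> Sigma (Poly_Mapping.keys (F $ n $ k)) (\<lambda>i. Poly_Mapping.keys (Poly_Mapping.lookup (F $ n $ k) i))" for i j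
    by (auto simp: coeffs_def lcoeff_def in_keys_iff)
qed

lemma coeffs_series_of_cover:
  assumes "\<And>n k. finite (S n k)" and "\<And>n k i j. f n k i j \<noteq> 0 \<Longrightarrow> (i, j) \<in> S n k"
  shows "coeffs (series_of f) n k i j = f n k i j"
  using coeffs_series_of[OF ser_goodI_cover[OF assms]] by simp

lemma lookup_mult_int:
  fixes p q :: "int \<Rightarrow>\<^sub>0 'b::comm_ring_1"
  shows "Poly_Mapping.lookup (p * q) i =
    (\<Sum>l\<in>Poly_Mapping.keys p. Poly_Mapping.lookup p l * Poly_Mapping.lookup q (i - l))"
proof -
  have shift: "Sum_any (\<lambda>q'. Poly_Mapping.lookup q q' when i = l + q') = Poly_Mapping.lookup q (i - l)" for l
  proof -
    have "(\<lambda>q'. Poly_Mapping.lookup q q' when i = l + q') = (\<lambda>q'. Poly_Mapping.lookup q q' when q' = i - l)"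
      by (auto simp: when_def)
    then show ?thesis by (simp only: Sum_any_when_equal)
  qed
  have "Poly_Mapping.lookup (p * q) i = Sum_any (\<lambda>l. Poly_Mapping.lookup p l * Poly_Mapping.lookup q (i - l))"
    by (simp add: lookup_mult shift)
  also have "\<dots> = (\<Sum>l\<in>Poly_Mapping.keys p. Poly_Mapping.lookup p l * Poly_Mapping.lookup q (i - l))"
    by (rule Sum_any.expand_superset) (auto simp: in_keys_iff)
  finally show ?thesis .
qed

lemma lcoeff_mult:
  "lcoeff (p * q) i j = (\<Sum>a\<in>{a. lcoeff p (fst a) (snd a) \<noteq> 0}. lcoeff p (fst a) (snd a) * lcoeff q (i - fst a) (j - snd a))"
proof -
  let ?K = "Poly_Mapping.keys" and ?l = "Poly_Mapping.lookup"
  have "lcoeff (p * q) i j = (\<Sum>l\<in>?K p. \<Sum>b\<in>?K (?l p l). lcoeff p l b * lcoeff q (i - l) (j - b))"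
    unfolding lcoeff_def by (simp add: lookup_mult_int lookup_sum)
  also have "\<dots> = (\<Sum>a\<in>Sigma (?K p) (\<lambda>l. ?K (?l p l)). lcoeff p (fst a) (snd a) * lcoeff q (i - fst a) (j - snd a))"
    by (subst sum.Sigma) (auto simp: case_prod_beta)
  also have "Sigma (?K p) (\<lambda>l. ?K (?l p l)) = {a. lcoeff p (fst a) (snd a) \<noteq> 0}"
    by (auto simp: lcoeff_def in_keys_iff)
  finally show ?thesis .
qed

lemma coeffs_mult: "coeffs (F * G) = ser_mult (coeffs F) (coeffs G)"
proof (intro ext)
  fix n k i j
  have "coeffs (F * G) n k i j = (\<Sum>n1\<in>{0..n}. \<Sum>k1\<in>{0..k}. lcoeff (F $ n1 $ k1 * G $ (n - n1) $ (k - k1)) i j)"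
    unfolding coeffs_def lcoeff_def fps_mult_nth fps_sum_nth lookup_sum by simp
  also have "\<dots> = ser_mult (coeffs F) (coeffs G) n k i j"
    unfolding ser_mult_def coeffs_def lcoeff_mult atLeast0AtMost ..
  finally show "coeffs (F * G) n k i j = ser_mult (coeffs F) (coeffs G) n k i j" .
qed

lemma coeffs_mult_apply: "coeffs (F * G) n k i j = ser_mult (coeffs F) (coeffs G) n k i j"
  by (simp add: coeffs_mult)

lemma coeffs_add [simp]: "coeffs (F + G) n k i j = coeffs F n k i j + coeffs G n k i j"
  by (simp add: coeffs_def lcoeff_def lookup_add)

lemma coeffs_diff [simp]: "coeffs (F - G) n k i j = coeffs F n k i j - coeffs G n k i j"
  by (simp add: coeffs_def lcoeff_def lookup_minus)

lemma coeffs_uminus [simp]: "coeffs (- F) n k i j = - coeffs F n k i j"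
  by (simp add: coeffs_def lcoeff_def)

lemma coeffs_zero [simp]: "coeffs 0 n k i j = 0"
  by (simp add: coeffs_def lcoeff_def)

lemma coeffs_one [simp]: "coeffs 1 n k i j = (if n = 0 \<and> k = 0 \<and> i = 0 \<and> j = 0 then 1 else 0)"
  by (simp add: coeffs_def lcoeff_def fps_one_nth lookup_one when_def)

lemma ser_one_eq: "ser_one = coeffs 1"
  by (intro ext) (simp add: ser_one_def)

lemma ser_mult_eq: "ser_good f \<Longrightarrow> ser_good g \<Longrightarrow> ser_mult f g = coeffs (series_of f * series_of g)"
  by (simp add: coeffs_mult coeffs_series_of)

lemma ser_diff_eq: "ser_good f \<Longrightarrow> ser_good g \<Longrightarrow> ser_diff f g = coeffs (series_of f - series_of g)"
  by (intro ext) (simp add: ser_diff_def coeffs_series_of)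

lemma coeffs_of_nat_mult: "coeffs (of_nat m * F) n k i j = of_nat m * coeffs F n k i j"
  by (induction m) (simp_all add: algebra_simps)

lemma coeffs_numeral [simp]: "coeffs (numeral m) n k i j = (if n = 0 \<and> k = 0 \<and> i = 0 \<and> j = 0 then numeral m else 0)"
  using coeffs_of_nat_mult[of "numeral m" 1 n k i j] by simp

lemma ser_scale_numeral_eq: "ser_good f \<Longrightarrow> ser_scale (numeral m) f = coeffs (numeral m * series_of f)"
  using coeffs_of_nat_mult[of "numeral m"] by (intro ext) (simp add: ser_scale_def coeffs_series_of)

lemma nth_eqI: "(\<And>k i j. coeffs F n k i j = coeffs G n k i j) \<Longrightarrow> F $ n = G $ n"
  unfolding coeffs_def lcoeff_def by (intro fps_ext poly_mapping_eqI) simp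

lemma nth_eqD: "F $ n = G $ n \<Longrightarrow> coeffs F n k i j = coeffs G n k i j"
  by (simp add: coeffs_def)

lemma coeffs_mult_nonzero_witness:
  assumes "coeffs (F * G) n k i j \<noteq> 0"
  shows "\<exists>n1\<le>n. \<exists>k1\<le>k. \<exists>i1 j1. coeffs F n1 k1 i1 j1 \<noteq> 0 \<and> coeffs G (n - n1) (k - k1) (i - i1) (j - j1) \<noteq> 0"
proof -
  from assms have "ser_mult (coeffs F) (coeffs G) n k i j \<noteq> 0" by (simp add: coeffs_mult)
  then obtain n1 k1 p where "n1 \<le> n" "k1 \<le> k"
    "coeffs F n1 k1 (fst p) (snd p) * coeffs G (n - n1) (k - k1) (i - fst p) (j - snd p) \<noteq> 0"
    unfolding ser_mult_def by (meson atMost_iff sum.not_neutral_contains_not_neutral)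
  then show ?thesis by (metis mult_zero_left mult_zero_right)
qed

definition monom :: "nat \<Rightarrow> nat \<Rightarrow> int \<Rightarrow> int \<Rightarrow> real \<Rightarrow> series" where
  "monom n0 k0 i0 j0 c = series_of (\<lambda>n k i j. if n = n0 \<and> k = k0 \<and> i = i0 \<and> j = j0 then c else 0)"

lemma coeffs_monom [simp]:
  "coeffs (monom n0 k0 i0 j0 c) n k i j = (if n = n0 \<and> k = k0 \<and> i = i0 \<and> j = j0 then c else 0)"
  unfolding monom_def by (rule coeffs_series_of_cover[where S = "\<lambda>_ _. {(i0, j0)}"]) (simp_all split: if_splits)

lemma coeffs_mult_single_degree:
  assumes supp: "\<And>n k i j. coeffs F n k i j \<noteq> 0 \<Longrightarrow> n = n' \<and> k = k'"
    and S: "finite S" "\<And>i j. coeffs F n' k' i j \<noteq> 0 \<Longrightarrow> (i, j) \<in> S"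
  shows "coeffs (F * G) n k i j = (if n' \<le> n \<and> k' \<le> k then
           (\<Sum>p\<in>S. coeffs F n' k' (fst p) (snd p) * coeffs G (n - n') (k - k') (i - fst p) (j - snd p)) else 0)"
proof -
  define t where "t n1 k1 p = coeffs F n1 k1 (fst p) (snd p) * coeffs G (n - n1) (k - k1) (i - fst p) (j - snd p)"
    for n1 k1 p
  have inner: "(\<Sum>p\<in>{p. coeffs F n1 k1 (fst p) (snd p) \<noteq> 0}. t n1 k1 p) =
      (if n1 = n' \<and> k1 = k' then (\<Sum>p\<in>S. t n' k' p) else 0)" for n1 k1
  proof (cases "n1 = n' \<and> k1 = k'")
    case True
    have "(\<Sum>p\<in>{p. coeffs F n1 k1 (fst p) (snd p) \<noteq> 0}. t n1 k1 p) = (\<Sum>p\<in>S. t n1 k1 p)"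
      by (rule sum.mono_neutral_left[OF S(1)]) (use S(2) True in \<open>auto simp: t_def\<close>)
    then show ?thesis using True by simp
  next
    case False
    then have "{p. coeffs F n1 k1 (fst p) (snd p) \<noteq> 0} = {}" using supp by blast
    then show ?thesis using False by (simp only: sum.empty) simp
  qed
  have "coeffs (F * G) n k i j = (\<Sum>n1\<le>n. \<Sum>k1\<le>k. if n1 = n' \<and> k1 = k' then (\<Sum>p\<in>S. t n' k' p) else 0)"
    unfolding coeffs_mult_apply ser_mult_def t_def[symmetric] inner ..
  also have "\<dots> = (\<Sum>n1\<le>n. if n1 = n' then (\<Sum>k1\<le>k. if k1 = k' then (\<Sum>p\<in>S. t n' k' p) else 0) else 0)"
    by (intro sum.cong refl) simp
  also have "\<dots> = (if n' \<le> n \<and> k' \<le> k then (\<Sum>p\<in>S. t n' k' p) else 0)"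
    by (cases "k' \<le> k") (simp_all add: sum.delta)
  finally show ?thesis unfolding t_def .
qed

lemma coeffs_monom_mult: "coeffs (monom n0 k0 i0 j0 c * G) n k i j =
    (if n0 \<le> n \<and> k0 \<le> k then c * coeffs G (n - n0) (k - k0) (i - i0) (j - j0) else 0)"
  by (subst coeffs_mult_single_degree[where S = "{(i0, j0)}"]) (auto split: if_splits)

definition supp_in :: "(nat \<Rightarrow> nat \<Rightarrow> int \<Rightarrow> int \<Rightarrow> bool) \<Rightarrow> series \<Rightarrow> bool" where
  "supp_in C F \<longleftrightarrow> (\<forall>n k i j. coeffs F n k i j \<noteq> 0 \<longrightarrow> C n k i j)"

definition add_closed :: "(nat \<Rightarrow> nat \<Rightarrow> int \<Rightarrow> int \<Rightarrow> bool) \<Rightarrow> bool" where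
  "add_closed C \<longleftrightarrow> (\<forall>n1 k1 i1 j1 n2 k2 i2 j2.
     C n1 k1 i1 j1 \<longrightarrow> C n2 k2 i2 j2 \<longrightarrow> C (n1 + n2) (k1 + k2) (i1 + i2) (j1 + j2))"

lemma supp_inD: "supp_in C F \<Longrightarrow> coeffs F n k i j \<noteq> 0 \<Longrightarrow> C n k i j"
  unfolding supp_in_def by blast

lemma supp_in_coeffs_eq_0: "supp_in C F \<Longrightarrow> \<not> C n k i j \<Longrightarrow> coeffs F n k i j = 0"
  unfolding supp_in_def by blast

lemma supp_inI: "(\<And>n k i j. coeffs F n k i j \<noteq> 0 \<Longrightarrow> C n k i j) \<Longrightarrow> supp_in C F"
  unfolding supp_in_def by blast

lemma supp_in_mult:
  assumes "supp_in C1 F" "supp_in C2 G"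
    and "\<And>n1 k1 i1 j1 n2 k2 i2 j2. C1 n1 k1 i1 j1 \<Longrightarrow> C2 n2 k2 i2 j2 \<Longrightarrow> C3 (n1+n2) (k1+k2) (i1+i2) (j1+j2)"
  shows "supp_in C3 (F * G)"
proof (rule supp_inI)
  fix n k i j assume "coeffs (F * G) n k i j \<noteq> 0"
  then obtain n1 k1 i1 j1 where w: "n1 \<le> n" "k1 \<le> k" "coeffs F n1 k1 i1 j1 \<noteq> 0"
      "coeffs G (n - n1) (k - k1) (i - i1) (j - j1) \<noteq> 0"
    using coeffs_mult_nonzero_witness by blast
  have "C3 (n1 + (n - n1)) (k1 + (k - k1)) (i1 + (i - i1)) (j1 + (j - j1))"
    using assms(3)[OF supp_inD[OF assms(1) w(3)] supp_inD[OF assms(2) w(4)]] .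
  then show "C3 n k i j" using w(1,2) by simp
qed

lemma supp_in_mult_closed:
  assumes "add_closed C" "supp_in C F" "supp_in C G" shows "supp_in C (F * G)"
  using assms(1) by (intro supp_in_mult[OF assms(2,3)]) (auto simp: add_closed_def)

lemma supp_in_add: "supp_in C F \<Longrightarrow> supp_in C G \<Longrightarrow> supp_in C (F + G)"
  unfolding supp_in_def by (metis add.right_neutral add_0 coeffs_add)

lemma supp_in_diff: "supp_in C F \<Longrightarrow> supp_in C G \<Longrightarrow> supp_in C (F - G)"
  unfolding supp_in_def by (metis diff_zero diff_self coeffs_diff)

lemma supp_in_one: "C 0 0 0 0 \<Longrightarrow> supp_in C 1"
  unfolding supp_in_def by simp

lemma supp_in_mono: "supp_in C F \<Longrightarrow> (\<And>n k i j. C n k i j \<Longrightarrow> C' n k i j) \<Longrightarrow> supp_in C' F"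
  unfolding supp_in_def by blast

lemma supp_in_conj: "supp_in C F \<Longrightarrow> supp_in C' F \<Longrightarrow> supp_in (\<lambda>n k i j. C n k i j \<and> C' n k i j) F"
  unfolding supp_in_def by blast

lemma supp_in_False_iff: "supp_in (\<lambda>n k i j. False) F \<longleftrightarrow> F = 0"
  by (auto simp: supp_in_def intro: coeffs_eqI)

lemma supp_in_plus_one:
  assumes "supp_in C (F - 1)" "\<And>n k i j. C n k i j \<Longrightarrow> C' n k i j" "C' 0 0 0 0"
  shows "supp_in C' F"
proof -
  have "supp_in C' (1 + (F - 1))" by (intro supp_in_add supp_in_one supp_in_mono[OF assms(1,2)] assms(3))
  then show ?thesis by simp
qed

lemma nth_0_eq_1: assumes "supp_in (\<lambda>n k i j. 1 \<le> n) (F - 1)" shows "F $ 0 = 1"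
proof -
  have "F $ 0 = (1::series) $ 0"
    by (rule nth_eqI) (use supp_in_coeffs_eq_0[OF assms] in fastforce)
  then show ?thesis by simp
qed

lemma nth_0_eq_1_if_supp_in: "supp_in C (F - 1) \<Longrightarrow> (\<And>n k i j. C n k i j \<Longrightarrow> 1 \<le> n) \<Longrightarrow> F $ 0 = 1"
  by (rule nth_0_eq_1) (rule supp_in_mono)

lemma supp_in_fixpoint:
  assumes eq: "G = A + H * G" and A: "supp_in C A" and H: "supp_in C H"
    and H0: "\<And>k i j. coeffs H 0 k i j = 0" and C: "add_closed C"
  shows "supp_in C G"
proof -
  have "\<forall>k i j. coeffs G n k i j \<noteq> 0 \<longrightarrow> C n k i j" for n
  proof (induction n rule: less_induct)
    case (less n)
    show ?case
    proof (intro allI impI)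
      fix k i j assume nz: "coeffs G n k i j \<noteq> 0"
      have "coeffs G n k i j = coeffs A n k i j + coeffs (H * G) n k i j"
        by (subst eq) simp
      with nz consider "coeffs A n k i j \<noteq> 0" | "coeffs (H * G) n k i j \<noteq> 0" by fastforce
      then show "C n k i j"
      proof cases
        case 1 then show ?thesis using supp_inD[OF A] by blast
      next
        case 2
        then obtain n1 k1 i1 j1 where w: "n1 \<le> n" "k1 \<le> k" "coeffs H n1 k1 i1 j1 \<noteq> 0"
            "coeffs G (n - n1) (k - k1) (i - i1) (j - j1) \<noteq> 0"
          using coeffs_mult_nonzero_witness by blast
        have "n1 \<noteq> 0" using w(3) H0 by (cases n1) auto
        then have "C (n - n1) (k - k1) (i - i1) (j - j1)" using less.IH w(1,4) by simp
        with supp_inD[OF H w(3)] C have "C (n1 + (n - n1)) (k1 + (k - k1)) (i1 + (i - i1)) (j1 + (j - j1))"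
          unfolding add_closed_def by blast
        then show ?thesis using w(1,2) by simp
      qed
    qed
  qed
  then show ?thesis unfolding supp_in_def by blast
qed

lemma supp_in_of_nat_mult: "supp_in C F \<Longrightarrow> supp_in C (of_nat m * F)"
  unfolding supp_in_def coeffs_of_nat_mult by simp

definition xsupp :: "(int \<Rightarrow> bool) \<Rightarrow> nat \<Rightarrow> nat \<Rightarrow> int \<Rightarrow> int \<Rightarrow> bool" where
  "xsupp P n k i j \<longleftrightarrow> k = 0 \<and> j = 0 \<and> P i"

definition t_order_ge :: "nat \<Rightarrow> nat \<Rightarrow> nat \<Rightarrow> int \<Rightarrow> int \<Rightarrow> bool" where
  "t_order_ge m n k i j \<longleftrightarrow> m \<le> n"

lemma supp_in_t_order_ge_mult:
  assumes "supp_in (t_order_ge p) F" "supp_in (t_order_ge q) G" shows "supp_in (t_order_ge (p + q)) (F * G)"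
  by (rule supp_in_mult[OF assms]) (simp add: t_order_ge_def)

lemma supp_in_t_order_ge_0: "supp_in (t_order_ge 0) F"
  by (simp add: supp_in_def t_order_ge_def)

lemma supp_in_t_order_ge_mono: "supp_in (t_order_ge p) F \<Longrightarrow> q \<le> p \<Longrightarrow> supp_in (t_order_ge q) F"
  by (erule supp_in_mono) (simp add: t_order_ge_def)

definition on_H :: "nat \<Rightarrow> nat \<Rightarrow> int \<Rightarrow> int \<Rightarrow> bool" where
  "on_H n k i j \<longleftrightarrow> in_H (i, j)"

definition on_pos_x_axis :: "nat \<Rightarrow> nat \<Rightarrow> int \<Rightarrow> int \<Rightarrow> bool" where
  "on_pos_x_axis n k i j \<longleftrightarrow> j = 0 \<and> 0 < i"

definition x_nonpos :: "nat \<Rightarrow> nat \<Rightarrow> int \<Rightarrow> int \<Rightarrow> bool" where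
  "x_nonpos n k i j \<longleftrightarrow> i \<le> 0"

definition proj :: "(nat \<Rightarrow> nat \<Rightarrow> int \<Rightarrow> int \<Rightarrow> bool) \<Rightarrow> series \<Rightarrow> series" where
  "proj C F = series_of (\<lambda>n k i j. if C n k i j then coeffs F n k i j else 0)"

lemma coeffs_proj [simp]: "coeffs (proj C F) n k i j = (if C n k i j then coeffs F n k i j else 0)"
  unfolding proj_def
  by (rule coeffs_series_of_cover[where S = "\<lambda>n k. {p. coeffs F n k (fst p) (snd p) \<noteq> 0}"])
     (simp_all add: ser_goodD split: if_splits)

lemma proj_add: "proj C (F + G) = proj C F + proj C G"
  by (rule coeffs_eqI) simp

lemma proj_id: "supp_in C F \<Longrightarrow> proj C F = F"
  by (rule coeffs_eqI) (auto simp: supp_in_def)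

lemma proj_eq_0:
  assumes "supp_in C' F" "\<And>n k i j. C' n k i j \<Longrightarrow> \<not> C n k i j" shows "proj C F = 0"
  by (rule coeffs_eqI) (use assms supp_in_coeffs_eq_0 in fastforce)

lemma supp_in_proj: "supp_in C (proj C F)"
  by (rule supp_inI) (simp split: if_splits)

definition inv_series :: "series \<Rightarrow> series" where
  "inv_series F = fps_right_inverse F 1"

lemma inv_series: "F $ 0 = 1 \<Longrightarrow> F * inv_series F = 1"
  unfolding inv_series_def by (rule fps_right_inverse) simp

lemma inv_series_left: "F $ 0 = 1 \<Longrightarrow> inv_series F * F = 1"
  using inv_series by (simp add: mult.commute)

lemma inverse_unique:
  assumes "(F::series) * G = 1" "F * G' = 1" shows "G = G'"
proof -
  have "G = G * (F * G')" using assms(2) by simp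
  also have "\<dots> = (F * G) * G'" by (simp only: ac_simps)
  finally show ?thesis using assms(1) by simp
qed

lemma supp_in_inverse:
  assumes "supp_in C F" "F $ 0 = 1" "F * G = 1" "C 0 0 0 0" "add_closed C"
  shows "supp_in C G"
proof (rule supp_in_fixpoint[where A = 1 and H = "1 - F"])
  show "G = 1 + (1 - F) * G" using assms(3) by (simp add: algebra_simps)
  show "supp_in C 1" using assms(4) by (rule supp_in_one)
  then show "supp_in C (1 - F)" using assms(1) by (rule supp_in_diff)
  show "coeffs (1 - F) 0 k i j = 0" for k i j using nth_eqD[of F 0 1] assms(2) by simp
qed (rule assms(5))

lemma supp_in_inv_series: "supp_in C F \<Longrightarrow> F $ 0 = 1 \<Longrightarrow> C 0 0 0 0 \<Longrightarrow> add_closed C \<Longrightarrow> supp_in C (inv_series F)"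
  by (rule supp_in_inverse[OF _ _ inv_series])

lemma square_eq_square_imp_eq:
  assumes "(F :: series) * F = G * G" "F $ 0 = 1" "G $ 0 = 1" shows "F = G"
proof -
  have "(F - G) * (F + G) = 0" using assms(1) by (simp add: algebra_simps)
  moreover have "F + G \<noteq> 0"
  proof
    assume "F + G = 0"
    then have "coeffs (F + G) 0 0 0 0 = 0" by simp
    moreover have "coeffs F 0 0 0 0 = 1" "coeffs G 0 0 0 0 = 1"
      using nth_eqD[of F 0 1] nth_eqD[of G 0 1] assms(2,3) by simp_all
    ultimately show False by simp
  qed
  ultimately show ?thesis by simp
qed

definition ycoeff :: "int \<Rightarrow> series \<Rightarrow> series" where
  "ycoeff m F = series_of (\<lambda>n k i j. if j = 0 then coeffs F n k i m else 0)"

lemma coeffs_ycoeff [simp]: "coeffs (ycoeff m F) n k i j = (if j = 0 then coeffs F n k i m else 0)"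
  unfolding ycoeff_def
proof (rule coeffs_series_of_cover[where S = "\<lambda>n k. (\<lambda>p. (fst p, 0)) ` {p. coeffs F n k (fst p) (snd p) \<noteq> 0}"])
  fix n k i j assume "(if j = 0 then coeffs F n k i m else 0) \<noteq> 0"
  then have "j = 0" "(i, m) \<in> {p. coeffs F n k (fst p) (snd p) \<noteq> 0}" by (simp_all split: if_splits)
  then show "(i, j) \<in> (\<lambda>p. (fst p, 0)) ` {p. coeffs F n k (fst p) (snd p) \<noteq> 0}"
    by (intro rev_image_eqI[of "(i, m)"]) simp_all
qed (simp add: ser_goodD)

lemma ycoeff_diff: "ycoeff m (F - G) = ycoeff m F - ycoeff m G"
  by (rule coeffs_eqI) simp

lemma ycoeff_one: "ycoeff m 1 = (if m = 0 then 1 else 0)"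
  by (rule coeffs_eqI) simp

lemma ycoeff_mult:
  assumes F: "supp_in (\<lambda>n k i j. j = 0) F"
  shows "ycoeff m (F * G) = F * ycoeff m G"
proof (rule coeffs_eqI)
  fix n k i j
  have "coeffs (F * ycoeff m G) n k i j = (\<Sum>n1\<le>n. \<Sum>k1\<le>k. \<Sum>p\<in>{p. coeffs F n1 k1 (fst p) (snd p) \<noteq> 0}.
      if j = 0 then coeffs F n1 k1 (fst p) (snd p) * coeffs G (n - n1) (k - k1) (i - fst p) (m - snd p) else 0)"
    unfolding coeffs_mult_apply ser_mult_def
    by (intro sum.cong refl) (auto dest: supp_inD[OF F])
  also have "\<dots> = (if j = 0 then coeffs (F * G) n k i m else 0)"
    unfolding coeffs_mult_apply ser_mult_def by simp
  finally show "coeffs (ycoeff m (F * G)) n k i j = coeffs (F * ycoeff m G) n k i j" by simp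
qed

lemma ser_good_y_plus_ybar: "ser_good y_plus_ybar"
  by (rule ser_goodI_cover[where S = "\<lambda>_ _. {(0, 1), (0, -1)}"]) (auto simp: y_plus_ybar_def split: if_splits)

lemma coeffs_y_plus_ybar_mult:
  "coeffs (series_of y_plus_ybar * G) n k i j = coeffs G n k i (j - 1) + coeffs G n k i (j + 1)"
proof -
  have "coeffs (series_of y_plus_ybar * G) n k i j = (\<Sum>p\<in>{(0, 1), (0, -1)}.
      coeffs (series_of y_plus_ybar) 0 0 (fst p) (snd p) * coeffs G n k (i - fst p) (j - snd p))"
    by (rule trans[OF coeffs_mult_single_degree[where n' = 0 and k' = 0 and S = "{(0, 1), (0, -1)}"]])
       (auto simp: coeffs_series_of ser_good_y_plus_ybar y_plus_ybar_def split: if_splits)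
  then show ?thesis by (simp add: coeffs_series_of ser_good_y_plus_ybar y_plus_ybar_def)
qed

lemma ycoeff_y_plus_ybar_mult: "ycoeff m (series_of y_plus_ybar * G) = ycoeff (m - 1) G + ycoeff (m + 1) G"
  by (rule coeffs_eqI) (simp add: coeffs_y_plus_ybar_mult)

definition reflect :: "(int \<times> int \<Rightarrow> int \<times> int) \<Rightarrow> series \<Rightarrow> series" where
  "reflect \<sigma> F = series_of (\<lambda>n k i j. coeffs F n k (fst (\<sigma> (i, j))) (snd (\<sigma> (i, j))))"

locale lattice_involution =
  fixes \<sigma> :: "int \<times> int \<Rightarrow> int \<times> int"
  assumes involution: "\<And>p. \<sigma> (\<sigma> p) = p"
    and diff: "\<And>a b c d. \<sigma> (a - c, b - d) = (fst (\<sigma> (a, b)) - fst (\<sigma> (c, d)), snd (\<sigma> (a, b)) - snd (\<sigma> (c, d)))"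
begin

lemma inj: "inj \<sigma>"
  by (metis injI involution)

lemma image_Collect: "\<sigma> ` {p. P p} = {q. P (\<sigma> q)}"
  using involution by (auto intro: rev_image_eqI)

lemma coeffs_reflect: "coeffs (reflect \<sigma> F) n k i j = coeffs F n k (fst (\<sigma> (i, j))) (snd (\<sigma> (i, j)))"
  unfolding reflect_def
proof (rule coeffs_series_of_cover[where S = "\<lambda>n k. \<sigma> ` {p. coeffs F n k (fst p) (snd p) \<noteq> 0}"])
  show "coeffs F n k (fst (\<sigma> (i, j))) (snd (\<sigma> (i, j))) \<noteq> 0 \<Longrightarrow> (i, j) \<in> \<sigma> ` {p. coeffs F n k (fst p) (snd p) \<noteq> 0}"
    for n k i j by (simp add: image_Collect)
qed (simp add: ser_goodD)

lemma reflect_diff: "reflect \<sigma> (F - G) = reflect \<sigma> F - reflect \<sigma> G"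
  by (rule coeffs_eqI) (simp add: coeffs_reflect)

lemma reflect_one: "reflect \<sigma> 1 = 1"
proof (rule coeffs_eqI)
  fix n k i j
  have "\<sigma> (0, 0) = (0, 0)" using diff[of 0 0 0 0] by (simp add: prod_eq_iff)
  then have "\<sigma> (i, j) = (0, 0) \<longleftrightarrow> (i, j) = (0, 0)" using involution by metis
  then show "coeffs (reflect \<sigma> 1) n k i j = coeffs 1 n k i j" by (simp add: coeffs_reflect prod_eq_iff)
qed

lemma reflect_mult: "reflect \<sigma> (F * G) = reflect \<sigma> F * reflect \<sigma> G"
proof (rule coeffs_eqI)
  fix n k i j
  define a b where "a = fst (\<sigma> (i, j))" and "b = snd (\<sigma> (i, j))"
  define t where "t n1 k1 p = coeffs F n1 k1 (fst p) (snd p) * coeffs G (n - n1) (k - k1) (a - fst p) (b - snd p)"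
    for n1 k1 p
  have reindex: "(\<Sum>q\<in>{q. coeffs F n1 k1 (fst (\<sigma> q)) (snd (\<sigma> q)) \<noteq> 0}. t n1 k1 (\<sigma> q)) =
      (\<Sum>p\<in>{p. coeffs F n1 k1 (fst p) (snd p) \<noteq> 0}. t n1 k1 p)" for n1 k1
    by (subst image_Collect[symmetric], subst sum.reindex) (auto simp: involution intro: inj_on_subset[OF inj])
  have "coeffs (reflect \<sigma> F * reflect \<sigma> G) n k i j = (\<Sum>n1\<le>n. \<Sum>k1\<le>k.
      \<Sum>q\<in>{q. coeffs F n1 k1 (fst (\<sigma> q)) (snd (\<sigma> q)) \<noteq> 0}. t n1 k1 (\<sigma> q))"
    unfolding coeffs_mult_apply ser_mult_def t_def by (simp add: coeffs_reflect diff a_def b_def)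
  also have "\<dots> = (\<Sum>n1\<le>n. \<Sum>k1\<le>k. \<Sum>p\<in>{p. coeffs F n1 k1 (fst p) (snd p) \<noteq> 0}. t n1 k1 p)"
    by (simp only: reindex)
  also have "\<dots> = coeffs (reflect \<sigma> (F * G)) n k i j"
    by (simp add: coeffs_reflect coeffs_mult_apply ser_mult_def a_def b_def t_def)
  finally show "coeffs (reflect \<sigma> (F * G)) n k i j = coeffs (reflect \<sigma> F * reflect \<sigma> G) n k i j" by simp
qed

end

definition neg_x :: "int \<times> int \<Rightarrow> int \<times> int" where "neg_x p = (- fst p, snd p)"
definition neg_y :: "int \<times> int \<Rightarrow> int \<times> int" where "neg_y p = (fst p, - snd p)"

interpretation reflect_x: lattice_involution neg_x
  by unfold_locales (simp_all add: neg_x_def)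

interpretation reflect_y: lattice_involution neg_y
  by unfold_locales (simp_all add: neg_y_def)

lemma coeffs_reflect_x [simp]: "coeffs (reflect neg_x F) n k i j = coeffs F n k (- i) j"
  by (simp add: reflect_x.coeffs_reflect neg_x_def)

lemma coeffs_reflect_y [simp]: "coeffs (reflect neg_y F) n k i j = coeffs F n k i (- j)"
  by (simp add: reflect_y.coeffs_reflect neg_y_def)

lemma ser_at_xbar_eq: "ser_at_xbar (coeffs F) = coeffs (reflect neg_x F)"
  by (intro ext) (simp add: ser_at_xbar_def)

section \<open>Symmetric small step sets and the kernel\<close>

locale symmetric_small_steps =
  fixes A :: "(int \<times> int) set"
  assumes finite_steps: "finite A"
    and sym_y: "\<And>i j. (i, j) \<in> A \<Longrightarrow> (i, - j) \<in> A"
    and small: "\<And>i j. (i, j) \<in> A \<Longrightarrow> \<bar>j\<bar> \<le> 1"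
    and sym_rev: "\<And>i j. (i, j) \<in> A \<Longrightarrow> (- i, - j) \<in> A"
begin

lemma ser_good_tA0: "ser_good (tA0 A)"
  by (rule ser_goodI_cover[where S = "\<lambda>_ _. A"]) (auto simp: tA0_def finite_steps split: if_splits)

lemma ser_good_tA1: "ser_good (tA1 A)"
proof (rule ser_goodI_cover[where S = "\<lambda>_ _. (\<lambda>p. (fst p, 0)) ` A"])
  show "tA1 A n k i j \<noteq> 0 \<Longrightarrow> (i, j) \<in> (\<lambda>p. (fst p, 0)) ` A" for n k i j
    by (intro rev_image_eqI[of "(i, 1)"]) (simp_all add: tA1_def split: if_splits)
qed (simp add: finite_steps)

definition "a0 = series_of (tA0 A)"
definition "a1 = series_of (tA1 A)"
definition "step = a0 + series_of y_plus_ybar * a1"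
definition "K = 1 - step"
definition "Kinv = inv_series K"
definition "delta = (1 - a0) * (1 - a0) - 4 * (a1 * a1)"

lemma coeffs_a0 [simp]: "coeffs a0 n k i j = (if n = 1 \<and> k = 0 \<and> j = 0 \<and> (i, 0) \<in> A then 1 else 0)"
  unfolding a0_def by (simp add: coeffs_series_of ser_good_tA0 tA0_def)

lemma coeffs_a1 [simp]: "coeffs a1 n k i j = (if n = 1 \<and> k = 0 \<and> j = 0 \<and> (i, 1) \<in> A then 1 else 0)"
  unfolding a1_def by (simp add: coeffs_series_of ser_good_tA1 tA1_def)

lemma mem_steps_iff: "(i, j) \<in> A \<longleftrightarrow> (j = 0 \<and> (i, 0) \<in> A) \<or> (j = 1 \<and> (i, 1) \<in> A) \<or> (j = -1 \<and> (i, 1) \<in> A)"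
proof
  assume a: "(i, j) \<in> A"
  then have "j = 0 \<or> j = 1 \<or> j = -1" using small by fastforce
  then show "(j = 0 \<and> (i, 0) \<in> A) \<or> (j = 1 \<and> (i, 1) \<in> A) \<or> (j = -1 \<and> (i, 1) \<in> A)"
    using a sym_y[of i j] by auto
qed (use sym_y[of i 1] in auto)

lemma coeffs_step: "coeffs step n k i j = (if n = 1 \<and> k = 0 \<and> (i, j) \<in> A then 1 else 0)"
proof -
  have "coeffs step n k i j = coeffs a0 n k i j + (coeffs a1 n k i (j - 1) + coeffs a1 n k i (j + 1))"
    unfolding step_def by (simp add: coeffs_y_plus_ybar_mult)
  then show ?thesis by (simp only: mem_steps_iff[of i j]) auto
qed

lemma coeffs_step_mult: "coeffs (step * G) n k i j =
    (if 1 \<le> n then (\<Sum>p\<in>A. coeffs G (n - 1) k (i - fst p) (j - snd p)) else 0)"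
proof -
  have "coeffs (step * G) n k i j = (if 1 \<le> n \<and> 0 \<le> k then
      (\<Sum>p\<in>A. coeffs step 1 0 (fst p) (snd p) * coeffs G (n - 1) (k - 0) (i - fst p) (j - snd p)) else 0)"
    by (rule coeffs_mult_single_degree) (use finite_steps in \<open>simp_all add: coeffs_step split: if_splits\<close>)
  then show ?thesis by (simp add: coeffs_step)
qed

lemma K_ser_eq: "K_ser A = coeffs K"
proof -
  have "K_ser A = coeffs (1 - a0 - series_of y_plus_ybar * a1)"
    unfolding K_ser_def a0_def a1_def
    by (simp add: ser_diff_eq ser_mult_eq ser_one_eq ser_good_tA0 ser_good_tA1 ser_good_y_plus_ybar coeffs_series_of)
  then show ?thesis unfolding K_def step_def by (simp add: algebra_simps)
qed

lemma delta_ser_eq: "delta_ser A = coeffs delta"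
  unfolding delta_ser_def delta_def a0_def a1_def
  by (simp add: ser_diff_eq ser_mult_eq ser_one_eq ser_scale_numeral_eq ser_good_tA0 ser_good_tA1 coeffs_series_of)

lemma K_nth_0: "K $ 0 = 1"
  by (rule nth_0_eq_1) (rule supp_inI, simp add: K_def coeffs_step split: if_splits)

lemma K_Kinv: "K * Kinv = 1"
  unfolding Kinv_def by (rule inv_series[OF K_nth_0])

lemma Kinv_nth_0: "Kinv $ 0 = 1"
  using arg_cong[OF K_Kinv, of "\<lambda>F. F $ 0"] K_nth_0 by simp

lemma Kinv_eq: "Kinv = 1 + step * Kinv"
  using K_Kinv unfolding K_def by (simp add: algebra_simps)

lemma supp_in_Kinv: "supp_in (\<lambda>n k i j. k = 0 \<and> \<bar>j\<bar> \<le> int n) Kinv"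
proof (rule supp_in_fixpoint[OF Kinv_eq])
  show "supp_in (\<lambda>n k i j. k = 0 \<and> \<bar>j\<bar> \<le> int n) 1" by (rule supp_in_one) simp
  show "supp_in (\<lambda>n k i j. k = 0 \<and> \<bar>j\<bar> \<le> int n) step"
    by (rule supp_inI) (auto simp: coeffs_step small split: if_splits)
  show "coeffs step 0 k i j = 0" for k i j by (simp add: coeffs_step)
  show "add_closed (\<lambda>n k i j. k = 0 \<and> \<bar>j\<bar> \<le> int n)" by (auto simp: add_closed_def)
qed

lemma supp_in_a0: "supp_in (\<lambda>n k i j. 1 \<le> n \<and> xsupp (\<lambda>_. True) n k i j) a0"
  by (rule supp_inI) (simp add: xsupp_def split: if_splits)

lemma supp_in_a1: "supp_in (\<lambda>n k i j. 1 \<le> n \<and> xsupp (\<lambda>_. True) n k i j) a1"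
  by (rule supp_inI) (simp add: xsupp_def split: if_splits)

lemma reflect_y_step: "reflect neg_y step = step"
proof -
  have "(i, - j) \<in> A \<longleftrightarrow> (i, j) \<in> A" for i j using sym_y[of i j] sym_y[of i "- j"] by auto
  then show ?thesis by (intro coeffs_eqI) (simp add: coeffs_step)
qed

lemma reflect_y_Kinv: "reflect neg_y Kinv = Kinv"
proof -
  have "reflect neg_y K = K"
    unfolding K_def by (simp add: reflect_y.reflect_diff reflect_y.reflect_one reflect_y_step)
  then have "K * reflect neg_y Kinv = 1"
    by (metis K_Kinv reflect_y.reflect_mult reflect_y.reflect_one)
  then show ?thesis using K_Kinv inverse_unique by blast
qed

lemma reflect_x_delta: "reflect neg_x delta = delta"
proof -
  have "(- i, 0) \<in> A \<longleftrightarrow> (i, 0) \<in> A" "(- i, 1) \<in> A \<longleftrightarrow> (i, 1) \<in> A" for i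
    using sym_rev[of i 0] sym_rev[of "- i" 0] sym_rev[of i 1] sym_rev[of "- i" 1]
      sym_y[of "- i" "-1"] sym_y[of i "-1"] by auto
  then have "reflect neg_x a0 = a0" "reflect neg_x a1 = a1" by (simp_all add: coeffs_eqI)
  moreover have "reflect neg_x 4 = (4 :: series)"
    by (rule coeffs_eqI) simp
  ultimately show ?thesis
    unfolding delta_def by (simp only: reflect_x.reflect_diff reflect_x.reflect_mult reflect_x.reflect_one)
qed

end

context symmetric_small_steps
begin

definition "Kinv_y m = ycoeff (int m) Kinv"

lemma supp_in_y0_a0: "supp_in (\<lambda>n k i j. j = 0) a0"
  by (rule supp_in_mono[OF supp_in_a0]) (simp add: xsupp_def)

lemma supp_in_y0_a1: "supp_in (\<lambda>n k i j. j = 0) a1"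
  by (rule supp_in_mono[OF supp_in_a1]) (simp add: xsupp_def)

lemma ycoeff_uminus_Kinv: "ycoeff (- m) Kinv = ycoeff m Kinv"
  by (rule coeffs_eqI) (metis coeffs_reflect_y coeffs_ycoeff reflect_y_Kinv)

lemma ycoeff_Kinv_recurrence:
  "ycoeff m Kinv - a0 * ycoeff m Kinv - a1 * (ycoeff (m - 1) Kinv + ycoeff (m + 1) Kinv) = (if m = 0 then 1 else 0)"
proof -
  have "ycoeff m (K * Kinv) = (if m = 0 then 1 else 0)" by (simp add: K_Kinv ycoeff_one)
  moreover have "K * Kinv = Kinv - a0 * Kinv - a1 * (series_of y_plus_ybar * Kinv)"
    unfolding K_def step_def by (simp add: algebra_simps)
  ultimately show ?thesis
    by (simp add: ycoeff_diff ycoeff_mult[OF supp_in_y0_a0] ycoeff_mult[OF supp_in_y0_a1] ycoeff_y_plus_ybar_mult)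
qed

lemma Kinv_y_recurrence: "(1 - a0) * Kinv_y (Suc m) = a1 * (Kinv_y m + Kinv_y (Suc (Suc m)))"
proof -
  have "int (Suc m) - 1 = int m" "int (Suc m) + 1 = int (Suc (Suc m))" by simp_all
  then have "Kinv_y (Suc m) - a0 * Kinv_y (Suc m) - a1 * (Kinv_y m + Kinv_y (Suc (Suc m))) = 0"
    using ycoeff_Kinv_recurrence[of "int (Suc m)"] unfolding Kinv_y_def by simp
  then show ?thesis by (simp add: algebra_simps)
qed

lemma Kinv_y_0_recurrence: "(1 - a0) * Kinv_y 0 - 2 * a1 * Kinv_y 1 = 1"
proof -
  have "Kinv_y 0 - a0 * Kinv_y 0 - a1 * (Kinv_y 1 + Kinv_y 1) = 1"
    using ycoeff_Kinv_recurrence[of 0] unfolding Kinv_y_def by (simp add: ycoeff_uminus_Kinv)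
  then show ?thesis by (simp add: algebra_simps)
qed

text \<open>A first integral of the three-term recurrence above.\<close>

definition "conserved m = a1 * Kinv_y m * Kinv_y m + a1 * Kinv_y (Suc m) * Kinv_y (Suc m)
  - (1 - a0) * Kinv_y m * Kinv_y (Suc m)"

lemma conserved_Suc: "conserved (Suc m) = conserved m"
proof -
  have r: "(1 - a0) * Kinv_y (Suc m) = a1 * (Kinv_y m + Kinv_y (Suc (Suc m)))" by (rule Kinv_y_recurrence)
  have "conserved (Suc m) = a1 * Kinv_y (Suc m) * Kinv_y (Suc m) + a1 * Kinv_y (Suc (Suc m)) * Kinv_y (Suc (Suc m))
      - ((1 - a0) * Kinv_y (Suc m)) * Kinv_y (Suc (Suc m))"
    unfolding conserved_def by (simp add: algebra_simps)
  also have "\<dots> = a1 * Kinv_y (Suc m) * Kinv_y (Suc m) - a1 * Kinv_y m * Kinv_y (Suc (Suc m))"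
    unfolding r by (simp add: algebra_simps)
  also have "\<dots> = a1 * Kinv_y m * Kinv_y m + a1 * Kinv_y (Suc m) * Kinv_y (Suc m) - Kinv_y m * ((1 - a0) * Kinv_y (Suc m))"
    unfolding r by (simp add: algebra_simps)
  finally show ?thesis unfolding conserved_def by (simp add: algebra_simps)
qed

lemma supp_in_Kinv_y: "supp_in (t_order_ge m) (Kinv_y m)"
proof (rule supp_inI)
  fix n k i j assume "coeffs (Kinv_y m) n k i j \<noteq> 0"
  then have "coeffs Kinv n k i (int m) \<noteq> 0" unfolding Kinv_y_def by (simp split: if_splits)
  then show "t_order_ge m n k i j" using supp_inD[OF supp_in_Kinv] by (force simp: t_order_ge_def)
qed

lemma supp_in_conserved: "supp_in (t_order_ge (Suc m)) (conserved m)"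
proof -
  have a1: "supp_in (t_order_ge 1) a1" by (rule supp_in_mono[OF supp_in_a1]) (simp add: t_order_ge_def)
  have t1: "supp_in (t_order_ge (1 + m + m)) (a1 * Kinv_y m * Kinv_y m)"
    and t2: "supp_in (t_order_ge (1 + Suc m + Suc m)) (a1 * Kinv_y (Suc m) * Kinv_y (Suc m))"
    and t3: "supp_in (t_order_ge (0 + m + Suc m)) ((1 - a0) * Kinv_y m * Kinv_y (Suc m))"
    by (intro supp_in_t_order_ge_mult a1 supp_in_t_order_ge_0 supp_in_Kinv_y)+
  show ?thesis unfolding conserved_def
    by (intro supp_in_diff supp_in_add supp_in_t_order_ge_mono[OF t1] supp_in_t_order_ge_mono[OF t2]
        supp_in_t_order_ge_mono[OF t3]) simp_all
qed

lemma conserved_0: "conserved 0 = 0"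
proof (rule coeffs_eqI)
  fix n k i j
  have "conserved n = conserved 0" by (induction n) (simp_all add: conserved_Suc)
  moreover have "coeffs (conserved n) n k i j = 0"
    by (rule supp_in_coeffs_eq_0[OF supp_in_conserved]) (simp add: t_order_ge_def)
  ultimately show "coeffs (conserved 0) n k i j = coeffs 0 n k i j" by simp
qed

lemma Kinv_y_0_square_delta: "Kinv_y 0 * Kinv_y 0 * delta = 1"
proof -
  define c v b where "c = Kinv_y 0" and "v = Kinv_y 1" and "b = 1 - a0"
  have r: "2 * a1 * v - b * c = -1" using Kinv_y_0_recurrence unfolding c_def v_def b_def by (simp add: algebra_simps)
  have i: "a1 * c * c + a1 * v * v - b * c * v = 0" using conserved_0 unfolding conserved_def c_def v_def b_def by simp
  have "4 * a1 * (a1 * c * c + a1 * v * v - b * c * v) + (c * c * (b * b - 4 * (a1 * a1)) - 1)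
      = (2 * a1 * v - b * c) * (2 * a1 * v - b * c) - 1"
    by (simp add: algebra_simps)
  then have "c * c * (b * b - 4 * (a1 * a1)) = 1" unfolding i r by simp
  then show ?thesis unfolding delta_def c_def b_def .
qed

lemma Kinv_y_0_nth_0: "Kinv_y 0 $ 0 = 1"
proof -
  have "coeffs (Kinv_y 0) 0 k i j = coeffs 1 0 k i j" for k i j
    using nth_eqD[of Kinv 0 1] Kinv_nth_0 unfolding Kinv_y_def by simp
  then show ?thesis using nth_eqI[of "Kinv_y 0" 0 1] by simp
qed

end

section \<open>Canonical factorization and square roots\<close>

definition canon_part :: "(int \<Rightarrow> bool) \<Rightarrow> nat \<Rightarrow> nat \<Rightarrow> int \<Rightarrow> int \<Rightarrow> bool" where
  "canon_part P n k i j \<longleftrightarrow> 1 \<le> n \<and> xsupp P n k i j"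

definition canonical_factors :: "series \<Rightarrow> series \<Rightarrow> series \<Rightarrow> bool" where
  "canonical_factors d s sb \<longleftrightarrow> supp_in (canon_part (\<lambda>i. i = 0)) (d - 1) \<and>
     supp_in (canon_part (\<lambda>i. 0 < i)) (s - 1) \<and> supp_in (canon_part (\<lambda>i. i < 0)) (sb - 1)"

lemma add_closed_xsupp: "(\<And>a b. P a \<Longrightarrow> P b \<Longrightarrow> P (a + b)) \<Longrightarrow> add_closed (xsupp P)"
  by (simp add: add_closed_def xsupp_def)

lemma add_closed_canon_part: "(\<And>a b. P a \<Longrightarrow> P b \<Longrightarrow> P (a + b)) \<Longrightarrow> add_closed (canon_part P)"
  by (simp add: add_closed_def canon_part_def xsupp_def)

lemma supp_in_xsupp_mult:
  "(\<And>a b. P a \<Longrightarrow> P b \<Longrightarrow> P (a + b)) \<Longrightarrow> supp_in (xsupp P) F \<Longrightarrow> supp_in (xsupp P) G \<Longrightarrow> supp_in (xsupp P) (F * G)"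
  by (rule supp_in_mult_closed[OF add_closed_xsupp])

lemma supp_in_xsupp_inv_series:
  "(\<And>a b. P a \<Longrightarrow> P b \<Longrightarrow> P (a + b)) \<Longrightarrow> P 0 \<Longrightarrow> supp_in (xsupp P) F \<Longrightarrow> F $ 0 = 1 \<Longrightarrow>
    supp_in (xsupp P) (inv_series F)"
  by (rule supp_in_inv_series) (simp_all add: add_closed_xsupp xsupp_def)

lemma canon_part_nth_0: assumes "supp_in (canon_part P) (F - 1)" shows "F $ 0 = 1"
  by (rule nth_0_eq_1_if_supp_in[OF assms]) (simp add: canon_part_def)

lemma canon_part_xsupp:
  assumes "supp_in (canon_part P) (F - 1)" "\<And>i. P i \<Longrightarrow> Q i" "Q 0" shows "supp_in (xsupp Q) F"
  by (rule supp_in_plus_one[OF assms(1)]) (use assms(2,3) in \<open>auto simp: canon_part_def xsupp_def\<close>)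

lemma canonical_factors_nth_0:
  assumes "canonical_factors d s sb" shows "d $ 0 = 1" "s $ 0 = 1" "sb $ 0 = 1"
  using assms unfolding canonical_factors_def by (blast intro: canon_part_nth_0)+

lemma canonical_factors_xsupp:
  assumes "canonical_factors d s sb"
  shows "supp_in (xsupp (\<lambda>i. i = 0)) d" "supp_in (xsupp (\<lambda>i. 0 \<le> i)) s" "supp_in (xsupp (\<lambda>i. i \<le> 0)) sb"
  using assms unfolding canonical_factors_def by (auto elim!: canon_part_xsupp)

lemma supp_in_square_minus_one:
  assumes "supp_in C (F - 1)" "add_closed C"
  shows "supp_in C (F * F - 1)"
proof -
  have "F * F - 1 = (F - 1) * (F - 1) + (F - 1) + (F - 1)" by (simp add: algebra_simps)
  then show ?thesis using assms by (metis supp_in_add supp_in_mult_closed)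
qed

lemma canonical_factors_square:
  "canonical_factors d s sb \<Longrightarrow> canonical_factors (d * d) (s * s) (sb * sb)"
  unfolding canonical_factors_def by (auto intro!: supp_in_square_minus_one add_closed_canon_part)

lemma supp_in_canon_part_reflect_x:
  assumes F: "supp_in (canon_part P) (F - 1)" and PQ: "\<And>i. P (- i) \<Longrightarrow> Q i"
  shows "supp_in (canon_part Q) (reflect neg_x F - 1)"
proof -
  have "reflect neg_x F - 1 = reflect neg_x (F - 1)" by (simp only: reflect_x.reflect_diff reflect_x.reflect_one)
  moreover have "supp_in (canon_part Q) (reflect neg_x (F - 1))"
  proof (rule supp_inI)
    fix n k i j assume "coeffs (reflect neg_x (F - 1)) n k i j \<noteq> 0"
    then have "canon_part P n k (- i) j" using supp_inD[OF F] by simp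
    then show "canon_part Q n k i j" using PQ[of i] by (simp add: canon_part_def xsupp_def)
  qed
  ultimately show ?thesis by simp
qed

lemma reflect_x_xsupp_0:
  assumes "supp_in (xsupp (\<lambda>i. i = 0)) F" shows "reflect neg_x F = F"
proof (rule coeffs_eqI)
  fix n k i j
  show "coeffs (reflect neg_x F) n k i j = coeffs F n k i j"
    using supp_in_coeffs_eq_0[OF assms, of n k i j] supp_in_coeffs_eq_0[OF assms, of n k "- i" j]
    by (cases "i = 0") (simp_all add: xsupp_def)
qed

lemma x0_part_mult_canonical:
  assumes V: "supp_in (xsupp (\<lambda>i. i = 0)) V" and N: "supp_in (canon_part P) (N - 1)" and P: "\<And>i. P i \<Longrightarrow> i \<noteq> 0"
  shows "proj (\<lambda>n k i j. i = 0) (V * N) = V"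
proof -
  have "supp_in (\<lambda>n k i j. i \<noteq> 0) (V * (N - 1))"
    by (rule supp_in_mult[OF V N]) (auto simp: xsupp_def canon_part_def dest: P)
  then have "proj (\<lambda>n k i j. i = 0) (V * (N - 1)) = 0" by (rule proj_eq_0) simp
  moreover have "proj (\<lambda>n k i j. i = 0) V = V" by (rule proj_id, rule supp_in_mono[OF V]) (simp add: xsupp_def)
  moreover have "V * N = V + V * (N - 1)" by (simp add: algebra_simps)
  ultimately show ?thesis by (simp add: proj_add)
qed

lemma plus_minus_factorization_unique:
  assumes eq: "E1 * N1 = E2 * N2"
    and E1: "supp_in (xsupp (\<lambda>i. 0 \<le> i)) E1" and E2: "supp_in (xsupp (\<lambda>i. 0 \<le> i)) E2" and E20: "E2 $ 0 = 1"
    and N1: "supp_in (canon_part (\<lambda>i. i < 0)) (N1 - 1)" and N2: "supp_in (canon_part (\<lambda>i. i < 0)) (N2 - 1)"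
  shows "E1 = E2 \<and> N1 = N2"
proof -
  txt \<open>\<open>V = E1 / E2 = N2 / N1\<close> has only nonnegative and only nonpositive powers of \<open>x\<close>, hence
    none but \<open>x\<^sup>0\<close>; comparing \<open>x\<^sup>0\<close>-parts in \<open>N2 = V N1\<close> then gives \<open>V = 1\<close>.\<close>
  have N10: "N1 $ 0 = 1" and N1': "supp_in (xsupp (\<lambda>i. i \<le> 0)) N1" and N2': "supp_in (xsupp (\<lambda>i. i \<le> 0)) N2"
    using N1 N2 by (auto intro: canon_part_nth_0 elim!: canon_part_xsupp)
  define V where "V = E1 * inv_series E2"
  have V_N: "V = N2 * inv_series N1"
  proof -
    have "V = E1 * inv_series E2 * (N1 * inv_series N1)" using inv_series N10 by (simp add: V_def)
    also have "\<dots> = (E1 * N1) * inv_series E2 * inv_series N1" by (simp only: ac_simps)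
    finally show ?thesis using inv_series[OF E20] by (simp add: eq ac_simps)
  qed
  have "supp_in (xsupp (\<lambda>i. 0 \<le> i)) V" unfolding V_def
    by (intro supp_in_xsupp_mult supp_in_xsupp_inv_series E1 E2 E20) simp_all
  moreover have "supp_in (xsupp (\<lambda>i. i \<le> 0)) V" unfolding V_N
    by (intro supp_in_xsupp_mult supp_in_xsupp_inv_series N1' N2' N10) simp_all
  ultimately have V: "supp_in (xsupp (\<lambda>i. i = 0)) V"
    by (rule supp_in_mono[OF supp_in_conj]) (auto simp: xsupp_def)
  have VN1: "V * N1 = N2" using inv_series_left N10 by (simp add: V_N mult.assoc)
  have "V = 1"
    using x0_part_mult_canonical[OF V N1] x0_part_mult_canonical[OF supp_in_one N2]
    by (simp add: VN1 xsupp_def)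
  moreover have "V * E2 = E1" using inv_series_left[OF E20] by (simp add: V_def mult.assoc)
  ultimately show ?thesis using VN1 by simp
qed

lemma canonical_factorization_unique:
  assumes eq: "D1 * P1 * N1 = D2 * P2 * N2"
    and c1: "canonical_factors D1 P1 N1" and c2: "canonical_factors D2 P2 N2"
  shows "D1 = D2 \<and> P1 = P2 \<and> N1 = N2"
proof -
  have p1: "supp_in (canon_part (\<lambda>i. 0 < i)) (P1 - 1)" and p2: "supp_in (canon_part (\<lambda>i. 0 < i)) (P2 - 1)"
    using c1 c2 by (simp_all add: canonical_factors_def)
  note nth0 = canonical_factors_nth_0[OF c1] canonical_factors_nth_0[OF c2]
  note xs = canonical_factors_xsupp[OF c1] canonical_factors_xsupp[OF c2]
  have "supp_in (xsupp (\<lambda>i. 0 \<le> i)) (D1 * P1)" "supp_in (xsupp (\<lambda>i. 0 \<le> i)) (D2 * P2)"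
    using xs by (auto intro!: supp_in_xsupp_mult elim: supp_in_mono simp: xsupp_def)
  from plus_minus_factorization_unique[OF eq this] nth0 c1 c2
  have E: "D1 * P1 = D2 * P2" and N: "N1 = N2" by (simp_all add: canonical_factors_def)
  have D: "D1 = D2"
    using x0_part_mult_canonical[OF xs(1) p1] x0_part_mult_canonical[OF xs(4) p2] E by simp
  have "D1 \<noteq> 0" using nth0 by auto
  then have "P1 = P2" using E D by simp
  then show ?thesis using D N by simp
qed

lemma exists_recursive_sequence:
  fixes \<Phi> :: "(nat \<Rightarrow> 'a) \<Rightarrow> nat \<Rightarrow> 'a"
  assumes "\<And>f g n. (\<And>m. m < n \<Longrightarrow> f m = g m) \<Longrightarrow> \<Phi> f n = \<Phi> g n"
  shows "\<exists>f. \<forall>n. f n = \<Phi> f n"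
proof -
  have "adm_wf less_than \<Phi>" unfolding adm_wf_def less_than_iff by (blast intro: assms)
  then have "wfrec less_than \<Phi> = \<Phi> (wfrec less_than \<Phi>)" by (rule wfrec_fixpoint[OF wf_less_than])
  then show ?thesis by metis
qed

lemma fps_cutoff_mult_cong:
  assumes "fps_cutoff m F = fps_cutoff m F'" "fps_cutoff m G = fps_cutoff m G'"
  shows "fps_cutoff m (F * G) = fps_cutoff m (F' * G')"
proof -
  have "(F * G) $ k = (F' * G') $ k" if "k < m" for k
  proof -
    have "(F * G) $ k = (fps_cutoff m F * fps_cutoff m G) $ k"
      using that by (simp add: fps_cutoff_left_mult_nth fps_cutoff_right_mult_nth)
    also have "\<dots> = (F' * G') $ k"
      using that by (simp add: assms fps_cutoff_left_mult_nth fps_cutoff_right_mult_nth)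
    finally show ?thesis .
  qed
  then show ?thesis by (simp add: fps_cutoff_eq_fps_cutoff_iff)
qed

lemma fps_cutoff_Suc_eq: "fps_cutoff (Suc n) F = fps_cutoff (Suc n) (fps_cutoff n F + fps_const (F $ n) * fps_X ^ n)"
  unfolding fps_cutoff_eq_fps_cutoff_iff
  by (auto simp: fps_X_power_mult_right_nth mult.commute[of "fps_const _"] less_Suc_eq)

lemma nth_square_of_perturbed_product:
  fixes D S B :: "'a::comm_ring_1 fps fps" and a b c :: "'a fps"
  assumes n: "1 \<le> n" and D0: "D $ 0 = 1" and S0: "S $ 0 = 1" and B0: "B $ 0 = 1"
  shows "((D + fps_const a * fps_X ^ n) * (S + fps_const b * fps_X ^ n) * (B + fps_const c * fps_X ^ n)
      * ((D + fps_const a * fps_X ^ n) * (S + fps_const b * fps_X ^ n) * (B + fps_const c * fps_X ^ n))) $ n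
    = ((D * S * B) * (D * S * B)) $ n + 2 * (a + b + c)"
proof -
  define Q where "Q = (D + fps_const a * fps_X ^ n) * (S + fps_const b * fps_X ^ n) * (B + fps_const c * fps_X ^ n)"
  define x where "x = (fps_X ^ n :: 'a fps fps)"
  define W where "W = D * S * B"
  define R1 where "R1 = fps_const a * S * B + fps_const b * D * B + fps_const c * D * S"
  define R2 where "R2 = fps_const a * fps_const b * B + fps_const a * fps_const c * S + fps_const b * fps_const c * D
     + x * fps_const a * fps_const b * fps_const c"
  have "Q = W + x * R1 + x * x * R2"
    unfolding Q_def W_def R1_def R2_def x_def[symmetric] by (simp add: algebra_simps)
  then have QQ: "Q * Q = W * W + x * (2 * W * R1) + x * (x * (R1 * R1 + 2 * W * R2 + 2 * x * R1 * R2 + x * x * R2 * R2))"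
    by (simp add: algebra_simps)
  have shift: "(x * H) $ n = H $ 0" "(x * H) $ 0 = 0" for H
    unfolding x_def using n by (simp_all add: fps_X_power_mult_nth)
  have "(Q * Q) $ n = (W * W) $ n + (2 * W * R1) $ 0"
    by (simp only: QQ fps_add_nth shift) simp
  also have "(2 * W * R1) $ 0 = 2 * (a + b + c)"
    unfolding W_def R1_def using D0 S0 B0 by (simp add: algebra_simps)
  finally show ?thesis unfolding Q_def W_def .
qed

lemma nth_square_of_product:
  fixes d s sb :: "'a::comm_ring_1 fps fps"
  assumes n: "1 \<le> n" and "d $ 0 = 1" "s $ 0 = 1" "sb $ 0 = 1"
  shows "(d * s * sb * (d * s * sb)) $ n = ((fps_cutoff n d * fps_cutoff n s * fps_cutoff n sb)
    * (fps_cutoff n d * fps_cutoff n s * fps_cutoff n sb)) $ n + 2 * (d $ n + s $ n + sb $ n)" (is "_ = ?rhs")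
proof -
  define D S B where "D = fps_cutoff n d + fps_const (d $ n) * fps_X ^ n"
    and "S = fps_cutoff n s + fps_const (s $ n) * fps_X ^ n" and "B = fps_cutoff n sb + fps_const (sb $ n) * fps_X ^ n"
  have w: "fps_cutoff (Suc n) (d * s * sb) = fps_cutoff (Suc n) (D * S * B)"
    unfolding D_def S_def B_def by (intro fps_cutoff_mult_cong fps_cutoff_Suc_eq)
  have "fps_cutoff (Suc n) (d * s * sb * (d * s * sb)) = fps_cutoff (Suc n) (D * S * B * (D * S * B))"
    by (rule fps_cutoff_mult_cong[OF w w])
  then have "(d * s * sb * (d * s * sb)) $ n = (D * S * B * (D * S * B)) $ n"
    by (metis fps_cutoff_nth lessI)
  also have "\<dots> = ?rhs" unfolding D_def S_def B_def using assms by (intro nth_square_of_perturbed_product) simp_all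
  finally show ?thesis .
qed

lemma coeffs_fps_cutoff [simp]: "coeffs (fps_cutoff m F) n k i j = (if n < m then coeffs F n k i j else 0)"
  by (simp add: coeffs_def lcoeff_def)

lemma supp_in_fps_cutoff: "supp_in C F \<Longrightarrow> supp_in C (fps_cutoff m F)"
  by (simp add: supp_in_def)

definition half :: series where "half = monom 0 0 0 0 (1/2)"

lemma half_add_half: "half + half = 1"
  by (rule coeffs_eqI) (simp only: half_def coeffs_add coeffs_monom coeffs_one, simp)

lemma supp_in_half: "supp_in (xsupp P) half" if "P 0"
  using that by (intro supp_inI) (simp add: half_def xsupp_def split: if_splits)

lemma proj_xsupp_split:
  assumes "supp_in (xsupp (\<lambda>_. True)) F"
  shows "proj (xsupp (\<lambda>i. i = 0)) F + proj (xsupp (\<lambda>i. 0 < i)) F + proj (xsupp (\<lambda>i. i < 0)) F = F"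
  by (rule coeffs_eqI) (use supp_in_coeffs_eq_0[OF assms] in \<open>auto simp: xsupp_def\<close>)

lemma supp_in_canon_part_of_nth:
  assumes "F $ 0 = 1" "\<And>n. 0 < n \<Longrightarrow> F $ n = proj (xsupp P) (H n) $ n"
  shows "supp_in (canon_part P) (F - 1)"
proof (rule supp_inI)
  fix n k i j assume nz: "coeffs (F - 1) n k i j \<noteq> 0"
  show "canon_part P n k i j"
  proof (cases "n = 0")
    case True
    then show ?thesis using nz nth_eqD[of F 0 1] assms(1) by simp
  next
    case False
    then have "coeffs F n k i j = coeffs (proj (xsupp P) (H n)) n k i j" using nth_eqD assms(2) by blast
    then show ?thesis using nz False by (simp add: canon_part_def split: if_splits)
  qed
qed

text \<open>The degree \<open>n\<close> coefficients of the three factors are half of the degree \<open>n\<close> defect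
  of the square of the truncated product, split according to the sign of the exponent of \<open>x\<close>.\<close>

definition sqrt_step ::
    "series \<Rightarrow> (nat \<Rightarrow> laurent2 fps \<times> laurent2 fps \<times> laurent2 fps) \<Rightarrow> nat \<Rightarrow> laurent2 fps \<times> laurent2 fps \<times> laurent2 fps"
  where
  "sqrt_step G h n = (if n = 0 then (1, 1, 1) else
     let W = fps_cutoff n (Abs_fps (fst \<circ> h)) * fps_cutoff n (Abs_fps (fst \<circ> snd \<circ> h))
             * fps_cutoff n (Abs_fps (snd \<circ> snd \<circ> h));
         R = half * (G - W * W)
     in (proj (xsupp (\<lambda>i. i = 0)) R $ n, proj (xsupp (\<lambda>i. 0 < i)) R $ n, proj (xsupp (\<lambda>i. i < 0)) R $ n))"

lemma sqrt_step_local: "(\<And>m. m < n \<Longrightarrow> f m = g m) \<Longrightarrow> sqrt_step G f n = sqrt_step G g n"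
proof -
  assume fg: "\<And>m. m < n \<Longrightarrow> f m = g m"
  have "fps_cutoff n (Abs_fps (\<pi> \<circ> f)) = fps_cutoff n (Abs_fps (\<pi> \<circ> g))" for \<pi> :: "_ \<Rightarrow> laurent2 fps"
    by (simp add: fps_cutoff_eq_fps_cutoff_iff fg)
  then show ?thesis unfolding sqrt_step_def by presburger
qed

lemma canonical_sqrt_exists:
  assumes G: "supp_in (xsupp (\<lambda>_. True)) G" and G0: "G $ 0 = 1"
  shows "\<exists>d s sb. G = (d * s * sb) * (d * s * sb) \<and> canonical_factors d s sb"
proof -
  obtain h where h: "\<And>n. h n = sqrt_step G h n"
    using exists_recursive_sequence[of "sqrt_step G"] sqrt_step_local by blast
  define d s sb where "d = Abs_fps (fst \<circ> h)" and "s = Abs_fps (fst \<circ> snd \<circ> h)" and "sb = Abs_fps (snd \<circ> snd \<circ> h)"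
  define W where "W n = fps_cutoff n d * fps_cutoff n s * fps_cutoff n sb" for n
  define R where "R n = half * (G - W n * W n)" for n
  have nth: "d $ n = proj (xsupp (\<lambda>i. i = 0)) (R n) $ n" "s $ n = proj (xsupp (\<lambda>i. 0 < i)) (R n) $ n"
      "sb $ n = proj (xsupp (\<lambda>i. i < 0)) (R n) $ n" if "0 < n" for n
    using h[of n] that by (simp_all add: sqrt_step_def d_def s_def sb_def R_def W_def Let_def)
  have nth0: "d $ 0 = 1" "s $ 0 = 1" "sb $ 0 = 1"
    using h[of 0] by (simp_all add: sqrt_step_def d_def s_def sb_def)
  have canonical: "canonical_factors d s sb"
    unfolding canonical_factors_def using nth nth0 by (blast intro: supp_in_canon_part_of_nth)
  have "supp_in (xsupp (\<lambda>_. True)) F" if "F \<in> {d, s, sb}" for F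
    using canonical_factors_xsupp[OF canonical] that by (auto elim: supp_in_mono simp: xsupp_def)
  then have R: "supp_in (xsupp (\<lambda>_. True)) (R n)" for n
    unfolding R_def W_def by (intro supp_in_xsupp_mult supp_in_half supp_in_diff G supp_in_fps_cutoff) simp_all
  have "(d * s * sb * (d * s * sb)) $ n = G $ n" for n
  proof (cases "n = 0")
    case True
    then show ?thesis using nth0 G0 by simp
  next
    case False
    have "(d * s * sb * (d * s * sb)) $ n = (W n * W n) $ n + 2 * (d $ n + s $ n + sb $ n)"
      unfolding W_def using False nth0 by (intro nth_square_of_product) simp_all
    also have "d $ n + s $ n + sb $ n = R n $ n"
      using proj_xsupp_split[OF R, of n] nth False by (metis fps_add_nth gr0I)
    also have "2 * R n $ n = (R n + R n) $ n" by (simp only: mult_2 fps_add_nth)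
    also have "R n + R n = G - W n * W n"
      unfolding R_def by (simp only: distrib_right[symmetric] half_add_half mult_1_left)
    finally show ?thesis by simp
  qed
  then have "G = d * s * sb * (d * s * sb)" by (intro fps_ext) simp
  with canonical show ?thesis by blast
qed

definition z_xbar_series :: series where "z_xbar_series = monom 0 1 (- 1) 0 1"

lemma z_xbar_eq: "z_xbar = coeffs z_xbar_series"
  by (intro ext) (simp add: z_xbar_def z_xbar_series_def)

definition geom_z_xbar :: series where
  "geom_z_xbar = series_of (\<lambda>n k i j. if n = 0 \<and> i = - int k \<and> j = 0 then 1 else 0)"

lemma coeffs_geom_z_xbar [simp]: "coeffs geom_z_xbar n k i j = (if n = 0 \<and> i = - int k \<and> j = 0 then 1 else 0)"
  unfolding geom_z_xbar_def
  by (rule coeffs_series_of_cover[where S = "\<lambda>n k. {(- int k, 0)}"]) (simp_all split: if_splits)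

lemma one_minus_z_xbar_geom: "(1 - z_xbar_series) * geom_z_xbar = 1"
proof (rule coeffs_eqI)
  fix n k i j
  have "coeffs ((1 - z_xbar_series) * geom_z_xbar) n k i j = coeffs geom_z_xbar n k i j - coeffs (z_xbar_series * geom_z_xbar) n k i j"
    by (simp add: algebra_simps)
  also have "\<dots> = coeffs 1 n k i j"
    unfolding z_xbar_series_def coeffs_monom_mult by (cases k) auto
  finally show "coeffs ((1 - z_xbar_series) * geom_z_xbar) n k i j = coeffs 1 n k i j" .
qed

lemma supp_in_geom_z_xbar: "supp_in on_H geom_z_xbar"
  by (rule supp_inI) (simp add: on_H_def in_H_def split: if_splits)

definition x_to_z :: "series \<Rightarrow> series" where
  "x_to_z F = series_of (ser_x_to_z (coeffs F))"

lemma coeffs_x_to_z [simp]: "coeffs (x_to_z F) n k i j = (if i = 0 then coeffs F n 0 (int k) j else 0)"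
  unfolding x_to_z_def ser_x_to_z_def
proof (rule coeffs_series_of_cover[where S = "\<lambda>n k. (\<lambda>p. (0, snd p)) ` {p. coeffs F n 0 (fst p) (snd p) \<noteq> 0}"])
  show "(if i = 0 then coeffs F n 0 (int k) j else 0) \<noteq> 0 \<Longrightarrow>
      (i, j) \<in> (\<lambda>p. (0, snd p)) ` {p. coeffs F n 0 (fst p) (snd p) \<noteq> 0}" for n k i j
    by (intro rev_image_eqI[of "(int k, j)"]) (simp_all split: if_splits)
qed (simp add: ser_goodD)

lemma x_to_z_eq: "coeffs (x_to_z F) = ser_x_to_z (coeffs F)"
  by (intro ext) (simp add: ser_x_to_z_def)

lemma supp_in_x_to_z: "supp_in (\<lambda>n k i j. j = 0) F \<Longrightarrow> supp_in (\<lambda>n k i j. i = 0 \<and> j = 0) (x_to_z F)"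
  by (rule supp_inI) (auto dest: supp_inD split: if_splits)

lemma x_to_z_nth_0: "F $ 0 = 1 \<Longrightarrow> x_to_z F $ 0 = 1"
  using nth_eqD[of F 0 1] nth_eqI[of "x_to_z F" 0 1] by simp

text \<open>For a power series \<open>F = \<Sum> f\<^sub>i x\<^sup>i\<close> in \<open>x\<close>, the quotient \<open>(F(x) - F(z)) / (1 - z/x)\<close> is the sum
  of \<open>f\<^sub>k\<^sub>+\<^sub>i x\<^sup>i z\<^sup>k\<close> over \<open>i \<ge> 1\<close> and \<open>k \<ge> 0\<close>.\<close>

definition x_to_z_quotient :: "series \<Rightarrow> series" where
  "x_to_z_quotient F = series_of (\<lambda>n k i j. if 1 \<le> i then coeffs F n 0 (int k + i) j else 0)"

lemma coeffs_x_to_z_quotient [simp]: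
  "coeffs (x_to_z_quotient F) n k i j = (if 1 \<le> i then coeffs F n 0 (int k + i) j else 0)"
  unfolding x_to_z_quotient_def
proof (rule coeffs_series_of_cover[where S = "\<lambda>n k. (\<lambda>p. (fst p - int k, snd p)) ` {p. coeffs F n 0 (fst p) (snd p) \<noteq> 0}"])
  show "(if 1 \<le> i then coeffs F n 0 (int k + i) j else 0) \<noteq> 0 \<Longrightarrow>
      (i, j) \<in> (\<lambda>p. (fst p - int k, snd p)) ` {p. coeffs F n 0 (fst p) (snd p) \<noteq> 0}" for n k i j
    by (intro rev_image_eqI[of "(int k + i, j)"]) (simp_all split: if_splits)
qed (simp add: ser_goodD)

lemma x_to_z_quotient_eq:
  assumes F: "supp_in (\<lambda>n k i j. k = 0 \<and> 0 \<le> i) F"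
  shows "F - x_to_z F = (1 - z_xbar_series) * x_to_z_quotient F"
proof (rule coeffs_eqI)
  fix n k i j
  have F0: "coeffs F n k i j = 0" if "k \<noteq> 0 \<or> i < 0" using supp_in_coeffs_eq_0[OF F] that by auto
  have "coeffs ((1 - z_xbar_series) * x_to_z_quotient F) n k i j
      = coeffs (x_to_z_quotient F) n k i j - coeffs (z_xbar_series * x_to_z_quotient F) n k i j"
    by (simp add: algebra_simps)
  also have "\<dots> = (if 1 \<le> i then coeffs F n 0 (int k + i) j else 0)
      - (if 1 \<le> k \<and> 0 \<le> i then coeffs F n 0 (int k + i) j else 0)"
    unfolding z_xbar_series_def coeffs_monom_mult by (cases k) (auto simp: algebra_simps)
  also have "\<dots> = coeffs (F - x_to_z F) n k i j"
    using F0 by (cases "k = 0"; cases "i = 0") auto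
  finally show "coeffs (F - x_to_z F) n k i j = coeffs ((1 - z_xbar_series) * x_to_z_quotient F) n k i j" by simp
qed

lemma supp_in_x_to_z_quotient: "supp_in (\<lambda>n k i j. j = 0) F \<Longrightarrow> supp_in on_pos_x_axis (x_to_z_quotient F)"
  by (rule supp_inI) (auto simp: on_pos_x_axis_def dest: supp_inD split: if_splits)

text \<open>The defect of multiplicativity is \<open>(1 - z/x) H\<close> with \<open>H\<close> involving only positive powers
  of \<open>x\<close>; on the other hand it is free of \<open>x\<close>, so \<open>H\<close> also has only nonpositive powers of \<open>x\<close>.\<close>

lemma x_to_z_mult:
  assumes F: "supp_in (xsupp (\<lambda>i. 0 \<le> i)) F" and G: "supp_in (xsupp (\<lambda>i. 0 \<le> i)) G"
  shows "x_to_z (F * G) = x_to_z F * x_to_z G"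
proof -
  have FG: "supp_in (xsupp (\<lambda>i. 0 \<le> i)) (F * G)" by (rule supp_in_xsupp_mult[OF _ F G]) simp
  have nonneg: "supp_in (\<lambda>n k i j. k = 0 \<and> 0 \<le> i) X" if "supp_in (xsupp (\<lambda>i. 0 \<le> i)) X" for X
    using that by (rule supp_in_mono) (simp add: xsupp_def)
  have y0: "supp_in (\<lambda>n k i j. j = 0) X" if "supp_in (xsupp (\<lambda>i. 0 \<le> i)) X" for X
    using that by (rule supp_in_mono) (simp add: xsupp_def)
  define H where "H = x_to_z_quotient F * G + x_to_z F * x_to_z_quotient G - x_to_z_quotient (F * G)"
  have defect: "x_to_z (F * G) - x_to_z F * x_to_z G = (1 - z_xbar_series) * H"
  proof -
    have "x_to_z (F * G) - x_to_z F * x_to_z G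
        = ((F - x_to_z F) * G + x_to_z F * (G - x_to_z G)) - (F * G - x_to_z (F * G))"
      by (simp add: algebra_simps)
    also have "\<dots> = (1 - z_xbar_series) * H"
      unfolding x_to_z_quotient_eq[OF nonneg[OF F]] x_to_z_quotient_eq[OF nonneg[OF G]]
        x_to_z_quotient_eq[OF nonneg[OF FG]] H_def by (simp add: algebra_simps)
    finally show ?thesis .
  qed
  have "supp_in (\<lambda>n k i j. 0 < i) H" unfolding H_def
    by (intro supp_in_diff supp_in_add supp_in_mult[OF supp_in_x_to_z_quotient[OF y0[OF F]] G]
        supp_in_mult[OF supp_in_x_to_z[OF y0[OF F]] supp_in_x_to_z_quotient[OF y0[OF G]]]
        supp_in_mono[OF supp_in_x_to_z_quotient[OF y0[OF FG]]])
      (auto simp: on_pos_x_axis_def xsupp_def)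
  moreover have "supp_in (\<lambda>n k i j. i \<le> 0) H"
  proof -
    have H: "H = geom_z_xbar * (x_to_z (F * G) - x_to_z F * x_to_z G)"
      unfolding defect using one_minus_z_xbar_geom by (simp add: ac_simps)
    have "supp_in (\<lambda>n k i j. i = 0 \<and> j = 0) (x_to_z (F * G) - x_to_z F * x_to_z G)"
      by (intro supp_in_diff supp_in_x_to_z y0 FG supp_in_mult[OF supp_in_x_to_z[OF y0[OF F]] supp_in_x_to_z[OF y0[OF G]]])
        simp
    then show ?thesis unfolding H
      by (rule supp_in_mult[OF supp_in_geom_z_xbar]) (simp add: on_H_def in_H_def)
  qed
  ultimately have "supp_in (\<lambda>n k i j. False) H" by (rule supp_in_mono[OF supp_in_conj]) auto
  then show ?thesis using defect by (simp add: supp_in_False_iff)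
qed

context symmetric_small_steps
begin

lemma supp_in_delta: "supp_in (xsupp (\<lambda>_. True)) delta"
proof -
  have a0: "supp_in (xsupp (\<lambda>_. True)) a0" and a1: "supp_in (xsupp (\<lambda>_. True)) a1"
    by (rule supp_in_mono[OF supp_in_a0], simp, rule supp_in_mono[OF supp_in_a1], simp)
  have "supp_in (xsupp (\<lambda>_. True)) ((1 - a0) * (1 - a0))"
    by (intro supp_in_diff supp_in_xsupp_mult supp_in_one a0) (simp_all add: xsupp_def)
  moreover have "supp_in (xsupp (\<lambda>_. True)) (of_nat 4 * (a1 * a1))"
    by (intro supp_in_of_nat_mult supp_in_xsupp_mult a1) simp
  ultimately show ?thesis unfolding delta_def by (intro supp_in_diff) simp_all
qed

lemma delta_nth_0: "delta $ 0 = 1"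
  using arg_cong[OF Kinv_y_0_square_delta, of "\<lambda>F. F $ 0"] Kinv_y_0_nth_0 by simp

definition "sqrt_factors = (SOME (d, s, sb). delta = (d * s * sb) * (d * s * sb) \<and> canonical_factors d s sb)"
definition "sqrtD = fst sqrt_factors"
definition "sqrtDelta = fst (snd sqrt_factors)"
definition "sqrtDeltabar = snd (snd sqrt_factors)"
definition "sqrt_delta = sqrtD * sqrtDelta * sqrtDeltabar"

lemma delta_eq_square: "delta = sqrt_delta * sqrt_delta"
  and canonical_sqrt: "canonical_factors sqrtD sqrtDelta sqrtDeltabar"
proof -
  have "\<exists>t. case t of (d, s, sb) \<Rightarrow> delta = (d * s * sb) * (d * s * sb) \<and> canonical_factors d s sb"
    using canonical_sqrt_exists[OF supp_in_delta delta_nth_0] by auto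
  from someI_ex[OF this] show "delta = sqrt_delta * sqrt_delta" "canonical_factors sqrtD sqrtDelta sqrtDeltabar"
    unfolding sqrt_delta_def sqrtD_def sqrtDelta_def sqrtDeltabar_def sqrt_factors_def[symmetric]
    by (simp_all add: case_prod_beta)
qed

lemmas sqrt_nth_0 = canonical_factors_nth_0[OF canonical_sqrt]
lemmas sqrt_xsupp = canonical_factors_xsupp[OF canonical_sqrt]

lemma sqrt_delta_nth_0: "sqrt_delta $ 0 = 1"
  by (simp add: sqrt_delta_def sqrt_nth_0)

lemma Kinv_y_0_sqrt_delta: "Kinv_y 0 * sqrt_delta = 1"
proof (rule square_eq_square_imp_eq)
  show "Kinv_y 0 * sqrt_delta * (Kinv_y 0 * sqrt_delta) = 1 * 1"
    using Kinv_y_0_square_delta delta_eq_square by (simp add: ac_simps)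
qed (simp_all add: Kinv_y_0_nth_0 sqrt_delta_nth_0)

lemma sqrtDeltabar_eq: "sqrtDeltabar = reflect neg_x sqrtDelta"
proof -
  have "reflect neg_x sqrt_delta = sqrt_delta"
  proof (rule square_eq_square_imp_eq)
    show "reflect neg_x sqrt_delta * reflect neg_x sqrt_delta = sqrt_delta * sqrt_delta"
      using reflect_x_delta delta_eq_square by (simp only: reflect_x.reflect_mult[symmetric])
    show "reflect neg_x sqrt_delta $ 0 = 1"
      using nth_eqD[of sqrt_delta 0 1] nth_eqI[of "reflect neg_x sqrt_delta" 0 1] sqrt_delta_nth_0 by simp
  qed (rule sqrt_delta_nth_0)
  moreover have D: "reflect neg_x sqrtD = sqrtD" by (rule reflect_x_xsupp_0[OF sqrt_xsupp(1)])
  ultimately have "sqrtD * sqrtDelta * sqrtDeltabar = reflect neg_x sqrtD * reflect neg_x sqrtDelta * reflect neg_x sqrtDeltabar"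
    unfolding sqrt_delta_def by (simp only: reflect_x.reflect_mult)
  then have eq: "sqrtD * sqrtDelta * sqrtDeltabar = sqrtD * reflect neg_x sqrtDeltabar * reflect neg_x sqrtDelta"
    unfolding D by (simp only: ac_simps)
  have c: "supp_in (canon_part (\<lambda>i. 0 < i)) (sqrtDelta - 1)" "supp_in (canon_part (\<lambda>i. i < 0)) (sqrtDeltabar - 1)"
    using canonical_sqrt by (simp_all add: canonical_factors_def)
  have "supp_in (canon_part (\<lambda>i. 0 < i)) (reflect neg_x sqrtDeltabar - 1)"
    by (rule supp_in_canon_part_reflect_x[OF c(2)]) simp
  moreover have "supp_in (canon_part (\<lambda>i. i < 0)) (reflect neg_x sqrtDelta - 1)"
    by (rule supp_in_canon_part_reflect_x[OF c(1)]) simp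
  ultimately have "canonical_factors sqrtD (reflect neg_x sqrtDeltabar) (reflect neg_x sqrtDelta)"
    using canonical_sqrt by (simp add: canonical_factors_def)
  from canonical_factorization_unique[OF eq canonical_sqrt this] show ?thesis by blast
qed

section \<open>The kernel method\<close>

lemma kernel_method:
  assumes eq: "K * F = E - R" and E: "supp_in on_H E" and R: "supp_in on_H R"
    and F0: "supp_in on_pos_x_axis (ycoeff 0 F - E)"
  shows "F = Kinv * (sqrtD * sqrtDeltabar * proj x_nonpos (sqrtDelta * E))"
proof -
  have "F = (Kinv * K) * F" using K_Kinv by (simp only: mult.commute[of Kinv] mult_1_left)
  also have "\<dots> = Kinv * (E - R)" by (simp only: mult.assoc eq)
  finally have F: "F = Kinv * (E - R)" .
  have "supp_in (\<lambda>n k i j. j = 0) (E - R)"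
    by (intro supp_in_diff supp_in_mono[OF E] supp_in_mono[OF R]) (simp_all add: on_H_def in_H_def)
  then have "ycoeff 0 ((E - R) * Kinv) = (E - R) * Kinv_y 0" by (simp add: ycoeff_mult Kinv_y_def)
  then have "ycoeff 0 F = (E - R) * Kinv_y 0" using F by (simp add: mult.commute)
  then have Y: "sqrt_delta * ycoeff 0 F = E - R"
    using Kinv_y_0_sqrt_delta by (simp add: ac_simps)
  define v where "v = inv_series (sqrtD * sqrtDeltabar)"
  have v: "v * (sqrtD * sqrtDeltabar) = 1" unfolding v_def by (rule inv_series_left) (simp add: sqrt_nth_0)
  have "supp_in (xsupp (\<lambda>i. i \<le> 0)) v" unfolding v_def using sqrt_xsupp
    by (intro supp_in_xsupp_inv_series supp_in_xsupp_mult) (auto simp: sqrt_nth_0 elim: supp_in_mono simp: xsupp_def)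
  then have left: "supp_in x_nonpos (v * (E - R))"
    by (rule supp_in_mult[OF _ supp_in_diff[OF E R]]) (simp add: xsupp_def on_H_def in_H_def x_nonpos_def)
  have right: "supp_in (\<lambda>n k i j. 0 < i) (sqrtDelta * (ycoeff 0 F - E))"
    using sqrt_xsupp(2) F0 by (rule supp_in_mult) (simp add: xsupp_def on_pos_x_axis_def)
  have "v * (E - R) = (v * (sqrtD * sqrtDeltabar)) * (sqrtDelta * ycoeff 0 F)"
    unfolding Y[symmetric] sqrt_delta_def by (simp only: ac_simps)
  then have vY: "v * (E - R) = sqrtDelta * ycoeff 0 F" using v by simp
  have "v * (E - R) = proj x_nonpos (v * (E - R))" using proj_id[OF left] by simp
  also have "\<dots> = proj x_nonpos (sqrtDelta * E + sqrtDelta * (ycoeff 0 F - E))"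
    unfolding vY by (simp add: algebra_simps)
  also have "\<dots> = proj x_nonpos (sqrtDelta * E)"
    using proj_eq_0[OF right, of x_nonpos] by (simp add: proj_add x_nonpos_def)
  finally have vER: "v * (E - R) = proj x_nonpos (sqrtDelta * E)" .
  have "E - R = (v * (sqrtD * sqrtDeltabar)) * (E - R)" using v by simp
  also have "\<dots> = sqrtD * sqrtDeltabar * (v * (E - R))" by (simp only: ac_simps)
  finally have "E - R = sqrtD * sqrtDeltabar * proj x_nonpos (sqrtDelta * E)" by (simp only: vER)
  then show ?thesis using F by simp
qed

lemma proj_sqrtDelta: "proj x_nonpos sqrtDelta = 1"
proof -
  have "proj x_nonpos sqrtDelta = proj x_nonpos 1 + proj x_nonpos (sqrtDelta - 1)" by (simp add: proj_add[symmetric])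
  moreover have "proj x_nonpos 1 = 1" by (rule proj_id, rule supp_in_one) (simp add: x_nonpos_def)
  moreover have "proj x_nonpos (sqrtDelta - 1) = 0"
    using canonical_sqrt unfolding canonical_factors_def by (auto intro: proj_eq_0 simp: canon_part_def xsupp_def x_nonpos_def)
  ultimately show ?thesis by simp
qed

lemma proj_sqrtDelta_geom_z_xbar: "proj x_nonpos (sqrtDelta * geom_z_xbar) = x_to_z sqrtDelta * geom_z_xbar"
proof -
  have nonneg: "supp_in (\<lambda>n k i j. k = 0 \<and> 0 \<le> i) sqrtDelta" and y0: "supp_in (\<lambda>n k i j. j = 0) sqrtDelta"
    using sqrt_xsupp(2) by (auto elim: supp_in_mono simp: xsupp_def)
  have "sqrtDelta * geom_z_xbar = x_to_z sqrtDelta * geom_z_xbar + (sqrtDelta - x_to_z sqrtDelta) * geom_z_xbar"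
    by (simp add: algebra_simps)
  also have "(sqrtDelta - x_to_z sqrtDelta) * geom_z_xbar = x_to_z_quotient sqrtDelta"
    unfolding x_to_z_quotient_eq[OF nonneg] using one_minus_z_xbar_geom by (simp add: ac_simps)
  finally have split: "sqrtDelta * geom_z_xbar = x_to_z sqrtDelta * geom_z_xbar + x_to_z_quotient sqrtDelta" .
  have "proj x_nonpos (x_to_z sqrtDelta * geom_z_xbar) = x_to_z sqrtDelta * geom_z_xbar"
    by (rule proj_id, rule supp_in_mult[OF supp_in_x_to_z[OF y0] supp_in_geom_z_xbar])
       (simp add: on_H_def in_H_def x_nonpos_def)
  moreover have "proj x_nonpos (x_to_z_quotient sqrtDelta) = 0"
    by (rule proj_eq_0[OF supp_in_x_to_z_quotient[OF y0]]) (simp add: on_pos_x_axis_def x_nonpos_def)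
  ultimately show ?thesis unfolding split proj_add by simp
qed

end

section \<open>Walks avoiding the half-line\<close>

definition walk_set :: "(int \<times> int) set \<Rightarrow> int \<Rightarrow> nat \<Rightarrow> int \<Rightarrow> int \<Rightarrow> (int \<times> int) list set" where
  "walk_set A k n i j = {ss. set ss \<subseteq> A \<and> length ss = n \<and> walk_pos k ss n = (i, j)
                              \<and> (\<forall>m\<in>{1..n}. \<not> in_H (walk_pos k ss m))}"

lemma walk_count_eq_card: "walk_count A k n i j = card (walk_set A k n i j)"
  unfolding walk_count_def walk_set_def ..

lemma walk_set_subset: "walk_set A k n i j \<subseteq> {ss. set ss \<subseteq> A \<and> length ss = n}"
  unfolding walk_set_def by blast

lemma finite_walk_set: "finite A \<Longrightarrow> finite (walk_set A k n i j)"
  using finite_subset[OF walk_set_subset finite_lists_length_eq] by blast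

lemma walk_pos_append: "m \<le> length ss \<Longrightarrow> walk_pos k (ss @ [p]) m = walk_pos k ss m"
  unfolding walk_pos_def by simp

lemma walk_pos_append_last:
  "walk_pos k (ss @ [p]) (Suc (length ss)) = (fst (walk_pos k ss (length ss)) + fst p, snd (walk_pos k ss (length ss)) + snd p)"
  unfolding walk_pos_def by simp

lemma walk_count_0: "walk_count A k 0 i j = (if i = k \<and> j = 0 then 1 else 0)"
proof -
  have "walk_set A k 0 i j = (if i = k \<and> j = 0 then {[]} else {})"
    unfolding walk_set_def walk_pos_def by auto
  then show ?thesis unfolding walk_count_eq_card by simp
qed

lemma walk_set_Suc:
  assumes "\<not> in_H (i, j)"
  shows "walk_set A k (Suc n) i j = (\<Union>p\<in>A. (\<lambda>ss. ss @ [p]) ` walk_set A k n (i - fst p) (j - snd p))"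
proof
  show "walk_set A k (Suc n) i j \<subseteq> (\<Union>p\<in>A. (\<lambda>ss. ss @ [p]) ` walk_set A k n (i - fst p) (j - snd p))"
  proof
    fix xs assume xs: "xs \<in> walk_set A k (Suc n) i j"
    then have "length xs = Suc n" unfolding walk_set_def by blast
    then obtain ss p where e: "xs = ss @ [p]" and len: "length ss = n"
      by (metis length_Suc_conv_rev)
    have "p \<in> A" "set ss \<subseteq> A" using xs e unfolding walk_set_def by auto
    moreover have "walk_pos k ss n = (i - fst p, j - snd p)"
      using xs walk_pos_append_last[of k ss p] len e unfolding walk_set_def by (simp add: prod_eq_iff)
    moreover have "\<not> in_H (walk_pos k ss m)" if "m \<in> {1..n}" for m
    proof -
      have "\<not> in_H (walk_pos k xs m)" using xs that unfolding walk_set_def by auto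
      then show ?thesis using walk_pos_append[of m ss k p] that len e by simp
    qed
    ultimately have "ss \<in> walk_set A k n (i - fst p) (j - snd p)" using len unfolding walk_set_def by blast
    then show "xs \<in> (\<Union>p\<in>A. (\<lambda>ss. ss @ [p]) ` walk_set A k n (i - fst p) (j - snd p))"
      using e \<open>p \<in> A\<close> by blast
  qed
  show "(\<Union>p\<in>A. (\<lambda>ss. ss @ [p]) ` walk_set A k n (i - fst p) (j - snd p)) \<subseteq> walk_set A k (Suc n) i j"
  proof
    fix xs assume "xs \<in> (\<Union>p\<in>A. (\<lambda>ss. ss @ [p]) ` walk_set A k n (i - fst p) (j - snd p))"
    then obtain p ss where p: "p \<in> A" and ss: "ss \<in> walk_set A k n (i - fst p) (j - snd p)" and e: "xs = ss @ [p]"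
      by blast
    have len: "length ss = n" and pos: "walk_pos k ss n = (i - fst p, j - snd p)"
      using ss unfolding walk_set_def by blast+
    have last: "walk_pos k xs (Suc n) = (i, j)" using walk_pos_append_last[of k ss p] len pos e by simp
    have "\<not> in_H (walk_pos k xs m)" if "m \<in> {1..Suc n}" for m
    proof (cases "m = Suc n")
      case False
      then have "m \<in> {1..n}" using that by auto
      then show ?thesis using ss walk_pos_append[of m ss k p] len e unfolding walk_set_def by auto
    qed (use last assms in simp)
    then show "xs \<in> walk_set A k (Suc n) i j" using last p ss len e unfolding walk_set_def by auto
  qed
qed

lemma walk_count_Suc:
  assumes "finite A"
  shows "walk_count A k (Suc n) i j =
    (if in_H (i, j) then 0 else (\<Sum>p\<in>A. walk_count A k n (i - fst p) (j - snd p)))"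
proof (cases "in_H (i, j)")
  case True
  have "False" if "ss \<in> walk_set A k (Suc n) i j" for ss
  proof -
    have "Suc n \<in> {1..Suc n}" by simp
    then have "walk_pos k ss (Suc n) = (i, j)" "\<not> in_H (walk_pos k ss (Suc n))"
      using that unfolding walk_set_def by blast+
    then show False using True by simp
  qed
  then have "walk_set A k (Suc n) i j = {}" by blast
  then show ?thesis using True unfolding walk_count_eq_card by simp
next
  case False
  have "card (walk_set A k (Suc n) i j) = (\<Sum>p\<in>A. card ((\<lambda>ss. ss @ [p]) ` walk_set A k n (i - fst p) (j - snd p)))"
    unfolding walk_set_Suc[OF False] using assms finite_walk_set by (intro card_UN_disjoint) auto
  also have "\<dots> = (\<Sum>p\<in>A. card (walk_set A k n (i - fst p) (j - snd p)))"
    by (intro sum.cong refl card_image) (simp add: inj_on_def)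
  finally show ?thesis using False unfolding walk_count_eq_card by simp
qed

lemma ser_good_walk_count: "finite A \<Longrightarrow> ser_good (\<lambda>n k i j. real (walk_count A (f k) n i j))"
proof (rule ser_goodI_cover[where S = "\<lambda>n k. (\<lambda>ss. walk_pos (f k) ss n) ` {ss. set ss \<subseteq> A \<and> length ss = n}"])
  fix n k i j assume "real (walk_count A (f k) n i j) \<noteq> 0"
  then obtain ss where "ss \<in> walk_set A (f k) n i j" unfolding walk_count_eq_card by (metis card.empty ex_in_conv of_nat_0)
  then show "(i, j) \<in> (\<lambda>ss. walk_pos (f k) ss n) ` {ss. set ss \<subseteq> A \<and> length ss = n}"
    unfolding walk_set_def by (auto intro: rev_image_eqI)
qed (simp add: finite_lists_length_eq)

context symmetric_small_steps
begin

lemma kernel_equation: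
  assumes G0: "\<And>k i j. coeffs G 0 k i j = coeffs E 0 k i j"
    and GSuc: "\<And>n k i j. coeffs G (Suc n) k i j = (if in_H (i, j) then 0 else coeffs (step * G) (Suc n) k i j)"
    and ESuc: "\<And>n k i j. coeffs E (Suc n) k i j = 0" and E: "supp_in on_H E"
  shows "K * G = E - proj on_H (step * G)" "supp_in on_pos_x_axis (ycoeff 0 G - E)"
proof -
  show "K * G = E - proj on_H (step * G)"
  proof (rule coeffs_eqI)
    fix n k i j
    have "K * G = G - step * G" unfolding K_def by (simp add: algebra_simps)
    then show "coeffs (K * G) n k i j = coeffs (E - proj on_H (step * G)) n k i j"
      by (cases n) (simp_all add: G0 GSuc ESuc coeffs_step_mult on_H_def)
  qed
  show "supp_in on_pos_x_axis (ycoeff 0 G - E)"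
  proof (rule supp_inI)
    fix n k i j assume nz: "coeffs (ycoeff 0 G - E) n k i j \<noteq> 0"
    have "j = 0" using nz supp_in_coeffs_eq_0[OF E, of n k i j] by (auto simp: on_H_def in_H_def split: if_splits)
    moreover have "\<not> i \<le> 0"
      using nz \<open>j = 0\<close> by (cases n) (auto simp: G0 GSuc ESuc in_H_def)
    ultimately show "on_pos_x_axis n k i j" by (simp add: on_pos_x_axis_def)
  qed
qed

definition "Sminus_series = series_of (Sminus_ser A)"
definition "S_series = series_of (S_ser A)"

lemma ser_good_Sminus_ser: "ser_good (Sminus_ser A)"
  unfolding Sminus_ser_def by (rule ser_good_walk_count[OF finite_steps])

lemma ser_good_S_ser: "ser_good (S_ser A)"
  using ser_good_walk_count[OF finite_steps, of "\<lambda>_. 0"]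
  by (rule ser_goodI_cover[OF ser_goodD]) (simp add: S_ser_def split: if_splits)

lemma coeffs_Sminus_series: "coeffs Sminus_series n k i j = real (walk_count A (- int k) n i j)"
  unfolding Sminus_series_def by (simp add: coeffs_series_of ser_good_Sminus_ser Sminus_ser_def)

lemma coeffs_S_series: "coeffs S_series n k i j = (if k = 0 then real (walk_count A 0 n i j) else 0)"
  unfolding S_series_def by (simp add: coeffs_series_of ser_good_S_ser S_ser_def)

lemma Sminus_ser_eq: "Sminus_ser A = coeffs Sminus_series"
  by (simp add: Sminus_series_def coeffs_series_of ser_good_Sminus_ser)

lemma S_ser_eq: "S_ser A = coeffs S_series"
  by (simp add: S_series_def coeffs_series_of ser_good_S_ser)

lemma Sminus_series_eq: "Sminus_series = Kinv * (sqrtD * sqrtDeltabar * (x_to_z sqrtDelta * geom_z_xbar))"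
proof -
  have "K * Sminus_series = geom_z_xbar - proj on_H (step * Sminus_series)"
    and "supp_in on_pos_x_axis (ycoeff 0 Sminus_series - geom_z_xbar)"
    by (rule kernel_equation[OF _ _ _ supp_in_geom_z_xbar];
        simp add: coeffs_Sminus_series walk_count_0 walk_count_Suc[OF finite_steps] coeffs_step_mult)+
  from kernel_method[OF this(1) supp_in_geom_z_xbar supp_in_proj this(2)] show ?thesis
    by (simp add: proj_sqrtDelta_geom_z_xbar)
qed

lemma S_series_eq: "S_series = Kinv * (sqrtD * sqrtDeltabar)"
proof -
  have E: "supp_in on_H 1" by (rule supp_in_one) (simp add: on_H_def in_H_def)
  have "K * S_series = 1 - proj on_H (step * S_series)" and "supp_in on_pos_x_axis (ycoeff 0 S_series - 1)"
    by (rule kernel_equation[OF _ _ _ E];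
        simp add: coeffs_S_series walk_count_0 walk_count_Suc[OF finite_steps] coeffs_step_mult)+
  from kernel_method[OF this(1) E supp_in_proj this(2)] show ?thesis
    by (simp add: proj_sqrtDelta)
qed

end

section \<open>The canonical factorization of \<open>\<delta>\<close>\<close>

lemma ser_sqrt_eq:
  assumes Z0: "Z $ 0 = 1"
  shows "ser_sqrt (coeffs (Z * Z)) = coeffs Z"
  unfolding ser_sqrt_def
proof (rule the_equality)
  have "coeffs Z 0 0 0 0 = 1" using nth_eqD[of Z 0 1] Z0 by simp
  then show "ser_good (coeffs Z) \<and> coeffs Z 0 0 0 0 = 1 \<and> ser_mult (coeffs Z) (coeffs Z) = coeffs (Z * Z)"
    by (simp add: coeffs_mult)
next
  fix g assume g: "ser_good g \<and> g 0 0 0 0 = 1 \<and> ser_mult g g = coeffs (Z * Z)"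
  then have "coeffs (series_of g * series_of g) = coeffs (Z * Z)" by (simp add: coeffs_mult coeffs_series_of)
  then have "series_of g * series_of g = Z * Z" by (rule coeffs_inject)
  then have "(series_of g - Z) * (series_of g + Z) = 0" by (simp add: algebra_simps)
  moreover have "series_of g + Z \<noteq> 0"
  proof
    assume "series_of g + Z = 0"
    then have "coeffs (series_of g) 0 0 0 0 + coeffs Z 0 0 0 0 = 0" using coeffs_add coeffs_zero by metis
    then show False using g nth_eqD[of Z 0 1] Z0 by (simp add: coeffs_series_of)
  qed
  ultimately have "series_of g = Z" by simp
  then have "coeffs (series_of g) = coeffs Z" by simp
  then show "g = coeffs Z" using g by (simp add: coeffs_series_of)
qed

lemma ser_inv_eq:
  assumes FG: "F * G = 1"
  shows "ser_inv (coeffs F) = coeffs G"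
  unfolding ser_inv_def
proof (rule the_equality)
  show "ser_good (coeffs G) \<and> ser_mult (coeffs F) (coeffs G) = ser_one"
    by (simp add: coeffs_mult[symmetric] FG ser_one_eq)
next
  fix g assume g: "ser_good g \<and> ser_mult (coeffs F) g = ser_one"
  then have "coeffs (F * series_of g) = coeffs 1" by (simp add: coeffs_mult coeffs_series_of ser_one_eq)
  then have "F * series_of g = 1" by (rule coeffs_inject)
  then have "series_of g = G" by (rule inverse_unique[OF _ FG])
  then have "coeffs (series_of g) = coeffs G" by simp
  then show "g = coeffs G" using g by (simp add: coeffs_series_of)
qed

lemma ser_inv_one_minus_z_xbar: "ser_inv (ser_diff ser_one z_xbar) = coeffs geom_z_xbar"
proof -
  have "ser_diff ser_one z_xbar = coeffs (1 - z_xbar_series)"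
    by (intro ext) (simp add: ser_diff_def ser_one_def z_xbar_eq)
  then show ?thesis using ser_inv_eq[OF one_minus_z_xbar_geom] by simp
qed

lemma canon_part_const_iff:
  "ser_good f \<and> supp_in (canon_part (\<lambda>i. i = 0)) (series_of f - 1) \<longleftrightarrow>
    (\<forall>n k i j. f n k i j \<noteq> 0 \<longrightarrow> k = 0 \<and> i = 0 \<and> j = 0) \<and> f 0 0 0 0 = 1"
proof
  assume "ser_good f \<and> supp_in (canon_part (\<lambda>i. i = 0)) (series_of f - 1)"
  then have f: "ser_good f" and S: "supp_in (canon_part (\<lambda>i. i = 0)) (series_of f - 1)" by blast+
  have *: "f n k i j = (if n = 0 \<and> k = 0 \<and> i = 0 \<and> j = 0 then 1 else 0)"
    if "\<not> canon_part (\<lambda>i. i = 0) n k i j" for n k i j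
    using supp_in_coeffs_eq_0[OF S that] by (simp add: coeffs_series_of[OF f])
  have "f n k i j \<noteq> 0 \<longrightarrow> k = 0 \<and> i = 0 \<and> j = 0" for n k i j
  proof (cases "canon_part (\<lambda>i. i = 0) n k i j")
    case False
    then show ?thesis using *[OF False] by (simp split: if_splits)
  qed (simp add: canon_part_def xsupp_def)
  moreover have "f 0 0 0 0 = 1" using *[of 0 0 0 0] by (simp add: canon_part_def)
  ultimately show "(\<forall>n k i j. f n k i j \<noteq> 0 \<longrightarrow> k = 0 \<and> i = 0 \<and> j = 0) \<and> f 0 0 0 0 = 1" by blast
next
  assume "(\<forall>n k i j. f n k i j \<noteq> 0 \<longrightarrow> k = 0 \<and> i = 0 \<and> j = 0) \<and> f 0 0 0 0 = 1"
  then have supp: "\<forall>n k i j. f n k i j \<noteq> 0 \<longrightarrow> k = 0 \<and> i = 0 \<and> j = 0" and f0: "f 0 0 0 0 = 1" by blast+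
  have f: "ser_good f" using supp by (intro ser_goodI_cover[where S = "\<lambda>_ _. {(0, 0)}"]) auto
  moreover have "supp_in (canon_part (\<lambda>i. i = 0)) (series_of f - 1)"
  proof (rule supp_inI)
    fix n k i j assume nz: "coeffs (series_of f - 1) n k i j \<noteq> 0"
    show "canon_part (\<lambda>i. i = 0) n k i j"
    proof (cases "n = 0 \<and> k = 0 \<and> i = 0 \<and> j = 0")
      case True then show ?thesis using nz f0 by (simp add: coeffs_series_of[OF f])
    next
      case False
      then have "f n k i j \<noteq> 0" using nz by (auto simp: coeffs_series_of[OF f])
      then show ?thesis using supp False by (simp add: canon_part_def xsupp_def)
    qed
  qed
  ultimately show "ser_good f \<and> supp_in (canon_part (\<lambda>i. i = 0)) (series_of f - 1)" ..
qed

lemma canon_part_sign_iff: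
  assumes P: "\<And>i. P i \<Longrightarrow> i \<noteq> 0" and Q: "\<And>i. Q i \<longleftrightarrow> P i \<or> i = 0"
  shows "ser_good f \<and> supp_in (canon_part P) (series_of f - 1) \<longleftrightarrow> ser_good f \<and>
    (\<forall>n k i j. f n k i j \<noteq> 0 \<longrightarrow> k = 0 \<and> j = 0 \<and> Q i) \<and>
    (\<forall>i. f 0 0 i 0 = (if i = 0 then 1 else 0)) \<and> (\<forall>n. f n 0 0 0 = (if n = 0 then 1 else 0))"
proof safe
  assume f: "ser_good f" and S: "supp_in (canon_part P) (series_of f - 1)"
  have *: "f n k i j = (if n = 0 \<and> k = 0 \<and> i = 0 \<and> j = 0 then 1 else 0)" if "\<not> canon_part P n k i j" for n k i j
    using supp_in_coeffs_eq_0[OF S that] by (simp add: coeffs_series_of[OF f])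
  show "f 0 0 i 0 = (if i = 0 then 1 else 0)" for i using *[of 0 0 i 0] by (simp add: canon_part_def)
  have "\<not> P 0" using P by blast
  then show "f n 0 0 0 = (if n = 0 then 1 else 0)" for n using *[of n 0 0 0] by (simp add: canon_part_def xsupp_def)
  fix n k i j assume nz: "f n k i j \<noteq> 0"
  show "k = 0" "j = 0" "Q i"
  proof (atomize (full), cases "canon_part P n k i j")
    case False
    then show "k = 0 \<and> j = 0 \<and> Q i" using *[OF False] nz by (simp add: Q split: if_splits)
  qed (simp add: Q canon_part_def xsupp_def)
next
  assume f: "ser_good f" and supp: "\<forall>n k i j. f n k i j \<noteq> 0 \<longrightarrow> k = 0 \<and> j = 0 \<and> Q i"
    and t0: "\<forall>i. f 0 0 i 0 = (if i = 0 then 1 else 0)" and x0: "\<forall>n. f n 0 0 0 = (if n = 0 then 1 else 0)"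
  show "supp_in (canon_part P) (series_of f - 1)"
  proof (rule supp_inI)
    fix n k i j assume nz: "coeffs (series_of f - 1) n k i j \<noteq> 0"
    have "n \<noteq> 0"
    proof
      assume n: "n = 0"
      show False
      proof (cases "k = 0 \<and> j = 0")
        case True then show False using nz t0 n by (auto simp: coeffs_series_of[OF f])
      next
        case False
        then have "f n k i j = 0" using supp by blast
        then show False using nz False by (auto simp: coeffs_series_of[OF f])
      qed
    qed
    then have "f n k i j \<noteq> 0" using nz by (simp add: coeffs_series_of[OF f])
    moreover have "i \<noteq> 0 \<or> k \<noteq> 0 \<or> j \<noteq> 0" using \<open>f n k i j \<noteq> 0\<close> x0 \<open>n \<noteq> 0\<close> by auto
    ultimately show "canon_part P n k i j" using supp \<open>n \<noteq> 0\<close> by (auto simp: Q canon_part_def xsupp_def)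
  qed
qed

context symmetric_small_steps
begin

lemma canonical_factorization_iff:
  "canonical_factorization A (D, Dl, Dlb) \<longleftrightarrow>
     (ser_good D \<and> supp_in (canon_part (\<lambda>i. i = 0)) (series_of D - 1)) \<and>
     (ser_good Dl \<and> supp_in (canon_part (\<lambda>i. 0 < i)) (series_of Dl - 1)) \<and>
     (ser_good Dlb \<and> supp_in (canon_part (\<lambda>i. i < 0)) (series_of Dlb - 1)) \<and>
     delta_ser A = ser_mult D (ser_mult Dl Dlb)"
proof -
  have pos: "ser_good f \<and> supp_in (canon_part (\<lambda>i. 0 < i)) (series_of f - 1) \<longleftrightarrow> ser_good f \<and>
    (\<forall>n k i j. f n k i j \<noteq> 0 \<longrightarrow> k = 0 \<and> j = 0 \<and> i \<ge> 0) \<and>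
    (\<forall>i. f 0 0 i 0 = (if i = 0 then 1 else 0)) \<and> (\<forall>n. f n 0 0 0 = (if n = 0 then 1 else 0))" for f
    by (rule canon_part_sign_iff) auto
  have neg: "ser_good f \<and> supp_in (canon_part (\<lambda>i. i < 0)) (series_of f - 1) \<longleftrightarrow> ser_good f \<and>
    (\<forall>n k i j. f n k i j \<noteq> 0 \<longrightarrow> k = 0 \<and> j = 0 \<and> i \<le> 0) \<and>
    (\<forall>i. f 0 0 i 0 = (if i = 0 then 1 else 0)) \<and> (\<forall>n. f n 0 0 0 = (if n = 0 then 1 else 0))" for f
    by (rule canon_part_sign_iff) auto
  show ?thesis unfolding canonical_factorization_def prod.case canon_part_const_iff pos neg by blast
qed

lemma canonical_factorization_eq:
  "canonical_factorization A tr \<longleftrightarrow>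
    tr = (coeffs (sqrtD * sqrtD), coeffs (sqrtDelta * sqrtDelta), coeffs (sqrtDeltabar * sqrtDeltabar))"
proof -
  obtain D Dl Dlb where tr: "tr = (D, Dl, Dlb)" by (cases tr)
  have squares: "canonical_factors (sqrtD * sqrtD) (sqrtDelta * sqrtDelta) (sqrtDeltabar * sqrtDeltabar)"
    by (rule canonical_factors_square[OF canonical_sqrt])
  have delta: "delta = (sqrtD * sqrtD) * (sqrtDelta * sqrtDelta) * (sqrtDeltabar * sqrtDeltabar)"
    using delta_eq_square unfolding sqrt_delta_def by (simp add: ac_simps)
  show ?thesis
  proof
    assume "canonical_factorization A tr"
    then have good: "ser_good D" "ser_good Dl" "ser_good Dlb"
      and c: "canonical_factors (series_of D) (series_of Dl) (series_of Dlb)"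
      and "delta_ser A = ser_mult D (ser_mult Dl Dlb)"
      unfolding tr canonical_factorization_iff canonical_factors_def by blast+
    then have "coeffs delta = coeffs (series_of D * series_of Dl * series_of Dlb)"
      by (simp add: delta_ser_eq coeffs_mult coeffs_series_of good mult.assoc)
    then have "series_of D * series_of Dl * series_of Dlb = sqrtD * sqrtD * (sqrtDelta * sqrtDelta) * (sqrtDeltabar * sqrtDeltabar)"
      using delta coeffs_inject by metis
    from canonical_factorization_unique[OF this c squares]
    have "sqrtD * sqrtD = series_of D" "sqrtDelta * sqrtDelta = series_of Dl" "sqrtDeltabar * sqrtDeltabar = series_of Dlb"
      by simp_all
    then show "tr = (coeffs (sqrtD * sqrtD), coeffs (sqrtDelta * sqrtDelta), coeffs (sqrtDeltabar * sqrtDeltabar))"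
      using good by (simp add: tr coeffs_series_of)
  next
    assume "tr = (coeffs (sqrtD * sqrtD), coeffs (sqrtDelta * sqrtDelta), coeffs (sqrtDeltabar * sqrtDeltabar))"
    moreover have "delta_ser A = ser_mult (coeffs (sqrtD * sqrtD)) (ser_mult (coeffs (sqrtDelta * sqrtDelta)) (coeffs (sqrtDeltabar * sqrtDeltabar)))"
      using delta by (simp add: delta_ser_eq coeffs_mult[symmetric] mult.assoc)
    ultimately show "canonical_factorization A tr"
      using squares by (simp add: canonical_factorization_iff canonical_factors_def)
  qed
qed

lemma ser_inv_K_ser: "ser_inv (K_ser A) = coeffs Kinv"
  unfolding K_ser_eq by (rule ser_inv_eq[OF K_Kinv])

lemma canD_eq: "canD A = coeffs (sqrtD * sqrtD)"
  and canDelta_eq: "canDelta A = coeffs (sqrtDelta * sqrtDelta)"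
  unfolding canD_def canDelta_def canonical_factorization_eq by simp_all

end

theorem mainTheorem12:
  fixes A :: "(int \<times> int) set"
  assumes "finite A"
    and "\<And>i j. (i, j) \<in> A \<Longrightarrow> (i, - j) \<in> A"
    and "\<And>i j. (i, j) \<in> A \<Longrightarrow> \<bar>j\<bar> \<le> 1"
    and "\<exists>i. (i, 1) \<in> A"
    and "\<And>i j. (i, j) \<in> A \<Longrightarrow> (- i, - j) \<in> A"
  shows "Sminus_ser A =
           ser_mult (ser_mult (ser_sqrt (ser_mult (canD A)
                                 (ser_mult (ser_at_xbar (canDelta A)) (ser_x_to_z (canDelta A)))))
                              (ser_inv (ser_diff ser_one z_xbar)))
                    (ser_inv (K_ser A))
       \<and> Sminus_ser A =
           ser_mult (ser_mult (ser_sqrt (ser_x_to_z (canDelta A)))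
                              (ser_inv (ser_diff ser_one z_xbar)))
                    (S_ser A)"
proof -
  interpret symmetric_small_steps A
    using assms(1,2,3,5) by unfold_locales
  have Delta_z: "ser_x_to_z (canDelta A) = coeffs (x_to_z sqrtDelta * x_to_z sqrtDelta)"
    unfolding canDelta_eq x_to_z_eq[symmetric] using sqrt_xsupp(2) by (simp add: x_to_z_mult)
  have Deltabar: "ser_at_xbar (canDelta A) = coeffs (sqrtDeltabar * sqrtDeltabar)"
    unfolding canDelta_eq ser_at_xbar_eq sqrtDeltabar_eq by (simp add: reflect_x.reflect_mult)
  have sqrt1: "ser_sqrt (ser_mult (canD A) (ser_mult (ser_at_xbar (canDelta A)) (ser_x_to_z (canDelta A))))
      = coeffs (sqrtD * sqrtDeltabar * x_to_z sqrtDelta)"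
    unfolding Delta_z Deltabar canD_eq coeffs_mult[symmetric]
    by (subst ser_sqrt_eq[symmetric]) (simp_all add: ac_simps sqrt_nth_0 x_to_z_nth_0)
  have sqrt2: "ser_sqrt (ser_x_to_z (canDelta A)) = coeffs (x_to_z sqrtDelta)"
    unfolding Delta_z by (rule ser_sqrt_eq) (simp add: sqrt_nth_0 x_to_z_nth_0)
  show ?thesis
    unfolding sqrt1 sqrt2 ser_inv_one_minus_z_xbar ser_inv_K_ser Sminus_ser_eq S_ser_eq coeffs_mult[symmetric]
      Sminus_series_eq S_series_eq
    by (simp add: ac_simps)
qed

end
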